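(* Let $\lambda\in(0,1)$, $T\ge1$, $p\in\Delta(K)$, $q\in\Delta(L)$. The value $V_{\lambda,T}(p,q)$ of the $\lambda$-discounted $T$-stage game satisfies $$V_{\lambda,T}(p,q)=\max\sum_{l\in L}q^lu_{l,0;\lambda,T}$$ over $x\in X_T(p)$, reals $u_{l,0;\lambda,T}$ and real $|A|\times|B|$ matrices $u_{l,h^A,h^B;\lambda,T}$ ($l\in L$, $h^A\in A^{s-1},h^B\in B^{s-1}$, $s=1,\dots,T-1$; equal to $0$ for histories of length $T-1$), subject to $\lambda\sum_k(M^{kl})^Tx_{k,\emptyset,\emptyset}+(1-\lambda)(u_{l,\emptyset,\emptyset;\lambda,T})^T\mathbf1\ge u_{l,0;\lambda,T}\mathbf1$ for all $l$, and $\lambda\sum_k(M^{kl})^Tx_{k,(h^A,a),(h^B,b)}+(1-\lambda)(u_{l,(h^A,a),(h^B,b);\lambda,T})^T\mathbf1\ge u^{a,b}_{l,h^A,h^B;\lambda,T}\mathbf1$ for all $s=1,\dots,T-1$, $l$, $h^A\in A^{s-1},h^B\in B^{s-1}$, $a,b$. The $x$-part $x^\star$ of an optimal solution is an optimal realization plan of player 1 in $\Gamma_{\lambda,T}(p,q)$, and $u_{l,0;\lambda,T}(x^\star)=u^\star_{l,0;\lambda,T}$ for all $l$, where $u^\star_{:,0;\lambda,T}$ is the corresponding part of the optimal solution. Dually, $V_{\lambda,T}(p,q)=\min\sum_kp^kw_{k,0;\lambda,T}$ over $y\in Y_T(q)$, reals $w_{k,0;\lambda,T}$ and $|A|\times|B|$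 matrices $w_{k,h^A,h^B;\lambda,T}$ (zero for histories of length $T-1$), subject to $\lambda\sum_lM^{kl}y_{l,\emptyset,\emptyset}+(1-\lambda)w_{k,\emptyset,\emptyset;\lambda,T}\mathbf1\le w_{k,0;\lambda,T}\mathbf1$ for all $k$ and $\lambda\sum_lM^{kl}y_{l,(h^A,a),(h^B,b)}+(1-\lambda)w_{k,(h^A,a),(h^B,b);\lambda,T}\mathbf1\le w^{a,b}_{k,h^A,h^B;\lambda,T}\mathbf1$ for all $s=1,\dots,T-1$, $k$, $h^A,h^B$ of length $s-1$, $a,b$; the $y$-part $y^\star$ of an optimal solution is an optimal realization plan of player 2 and $w_{k,0;\lambda,T}(y^\star)=w^\star_{k,0;\lambda,T}$ for all $k$.
   Context: Setting: nonempty finite $K,L,A,B$; $M:K\times L\times A\times B\to\mathbb R$, $M^{kl}=(M(k,l,a,b))_{a,b}$; $p\in\Delta(K),q\in\Delta(L)$ with positive entries. Types $k\sim p$, $l\sim q$ drawn independently and told privately to players 1 and 2; at each stage actions $a_t\in A,b_t\in B$ chosen simultaneously and announced; behavior strategies $\sigma_t:K\times A^{t-1}\times B^{t-1}\to\Delta(A)$, $\tau_t:L\times A^{t-1}\times B^{t-1}\to\Delta(B)$. The $\lambda$-discounted $T$-stage game $\Gamma_{\lambda,T}(p,q)$ has payoff $\mathbb E_{p,q,\sigma,\tau}[\sum_{t=1}^T\lambda(1-\lambda)^{t-1}M(k,l,a_t,b_t)]$ to player 1 (maximizer), value $V_{\lambda,T}(p,q)$. $X_T(p)$: families $x=(x_{k,h^A,h^B})$,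 $k\in K$, $h^A\in A^{t-1},h^B\in B^{t-1}$, $t=1,\dots,T$, $x_{k,h^A,h^B}\in\mathbb R^{|A|}$, $x\ge0$, $\mathbf1^Tx_{k,\emptyset,\emptyset}=p^k$, $\mathbf1^Tx_{k,(h^A,a),(h^B,b)}=x^a_{k,h^A,h^B}$; the realization plan of $\sigma$ is $x^{a_t}_{k,h_t^A,h_t^B}=p^k\prod_{s=1}^t\sigma^{a_s}_s(k,h^A_s,h^B_s)$ (prefix histories), and $x\in X_T(p)$ determines $\sigma$ by ratios. $Y_T(q)$ symmetric with $y_{l,h^A,h^B}\in\mathbb R^{|B|}$ and $q$. An optimal realization plan is that of a security strategy. Anti-discounted weighted future security payoffs at stage 0: for $x\in X_T(p)$ with strategy $\sigma$, $u_{l,0;\lambda,T}(x)=\min_{\tau(l)}\sum_kp^k\,\mathbb E[\sum_{s=1}^T\lambda(1-\lambda)^{s-1}M(k,l,a_s,b_s)\mid k,l]$, the minimum over behavior strategies of player 2 of type $l$; for $y\in Y_T(q)$ with strategy $\tau$, $w_{k,0;\lambda,T}(y)=\max_{\sigma(k)}\sum_lq^l\,\mathbb E[\sum_{s=1}^T\lambda(1-\lambda)^{s-1}M(k,l,a_s,b_s)\mid k,l]$. *)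

theory Defs
  imports Complex_Main
begin

text \<open>Histories: a stage-t history is a pair (ha, hb) of lists of equal length t-1;
  actions are appended at the end, so (ha @ [a], hb @ [b]) is the history (h^A,a),(h^B,b).
  Behavior strategies are total functions; only their values on histories of
  length < T matter.\<close>

type_synonym ('k,'a,'b) strat1 = "'k \<Rightarrow> 'a list \<Rightarrow> 'b list \<Rightarrow> 'a \<Rightarrow> real"
type_synonym ('l,'a,'b) strat2 = "'l \<Rightarrow> 'a list \<Rightarrow> 'b list \<Rightarrow> 'b \<Rightarrow> real"

definition is_distr :: "('x::finite \<Rightarrow> real) \<Rightarrow> bool" where
  "is_distr d \<longleftrightarrow> (\<forall>x. d x \<ge> 0) \<and> (\<Sum>x\<in>UNIV. d x) = 1"

definition is_hist :: "nat \<Rightarrow> 'a list \<Rightarrow> 'b list \<Rightarrow> bool" where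
  "is_hist T ha hb \<longleftrightarrow> length ha = length hb \<and> length ha < T"

definition is_strat1 :: "nat \<Rightarrow> ('k,'a::finite,'b) strat1 \<Rightarrow> bool" where
  "is_strat1 T \<sigma> \<longleftrightarrow> (\<forall>k ha hb. is_hist T ha hb \<longrightarrow> is_distr (\<sigma> k ha hb))"

definition is_strat2 :: "nat \<Rightarrow> ('l,'a,'b::finite) strat2 \<Rightarrow> bool" where
  "is_strat2 T \<tau> \<longleftrightarrow> (\<forall>l ha hb. is_hist T ha hb \<longrightarrow> is_distr (\<tau> l ha hb))"

definition pr1 :: "('k,'a,'b) strat1 \<Rightarrow> 'k \<Rightarrow> 'a list \<Rightarrow> 'b list \<Rightarrow> real" where
  "pr1 \<sigma> k ha hb = (\<Prod>s<length ha. \<sigma> k (take s ha) (take s hb) (ha ! s))"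

definition pr2 :: "('l,'a,'b) strat2 \<Rightarrow> 'l \<Rightarrow> 'a list \<Rightarrow> 'b list \<Rightarrow> real" where
  "pr2 \<tau> l ha hb = (\<Prod>s<length hb. \<tau> l (take s ha) (take s hb) (hb ! s))"

definition cond_payoff ::
  "('k \<Rightarrow> 'l \<Rightarrow> 'a \<Rightarrow> 'b \<Rightarrow> real) \<Rightarrow> real \<Rightarrow> nat \<Rightarrow>
   ('k,'a,'b) strat1 \<Rightarrow> ('l,'a,'b) strat2 \<Rightarrow> 'k \<Rightarrow> 'l \<Rightarrow> real" where
  "cond_payoff M lam T \<sigma> \<tau> k l =
     (\<Sum>ha\<in>{ha. length ha = T}. \<Sum>hb\<in>{hb. length hb = T}.
        pr1 \<sigma> k ha hb * pr2 \<tau> l ha hb *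
        (\<Sum>s<T. lam * (1 - lam) ^ s * M k l (ha ! s) (hb ! s)))"

definition payoff ::
  "('k::finite \<Rightarrow> 'l::finite \<Rightarrow> 'a \<Rightarrow> 'b \<Rightarrow> real) \<Rightarrow> real \<Rightarrow> nat \<Rightarrow> ('k \<Rightarrow> real) \<Rightarrow> ('l \<Rightarrow> real) \<Rightarrow>
   ('k,'a,'b) strat1 \<Rightarrow> ('l,'a,'b) strat2 \<Rightarrow> real" where
  "payoff M lam T p q \<sigma> \<tau> = (\<Sum>k\<in>UNIV. \<Sum>l\<in>UNIV. p k * q l * cond_payoff M lam T \<sigma> \<tau> k l)"

definition is_value ::
  "('k::finite \<Rightarrow> 'l::finite \<Rightarrow> 'a::finite \<Rightarrow> 'b::finite \<Rightarrow> real) \<Rightarrow> real \<Rightarrow> nat \<Rightarrow>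
   ('k \<Rightarrow> real) \<Rightarrow> ('l \<Rightarrow> real) \<Rightarrow> real \<Rightarrow> bool" where
  "is_value M lam T p q v \<longleftrightarrow>
     (\<exists>\<sigma>. is_strat1 T \<sigma> \<and> (\<forall>\<tau>. is_strat2 T \<tau> \<longrightarrow> payoff M lam T p q \<sigma> \<tau> \<ge> v)) \<and>
     (\<exists>\<tau>. is_strat2 T \<tau> \<and> (\<forall>\<sigma>. is_strat1 T \<sigma> \<longrightarrow> payoff M lam T p q \<sigma> \<tau> \<le> v))"

definition game_value ::
  "('k::finite \<Rightarrow> 'l::finite \<Rightarrow> 'a::finite \<Rightarrow> 'b::finite \<Rightarrow> real) \<Rightarrow> real \<Rightarrow> nat \<Rightarrow>
   ('k \<Rightarrow> real) \<Rightarrow> ('l \<Rightarrow> real) \<Rightarrow> real" where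
  "game_value M lam T p q = (THE v. is_value M lam T p q v)"

definition security1 where
  "security1 M lam T p q \<sigma> \<longleftrightarrow> is_strat1 T \<sigma> \<and>
     (\<forall>\<tau>. is_strat2 T \<tau> \<longrightarrow> payoff M lam T p q \<sigma> \<tau> \<ge> game_value M lam T p q)"

definition security2 where
  "security2 M lam T p q \<tau> \<longleftrightarrow> is_strat2 T \<tau> \<and>
     (\<forall>\<sigma>. is_strat1 T \<sigma> \<longrightarrow> payoff M lam T p q \<sigma> \<tau> \<le> game_value M lam T p q)"

definition in_X :: "nat \<Rightarrow> ('k \<Rightarrow> real) \<Rightarrow> ('k,'a::finite,'b) strat1 \<Rightarrow> bool" where
  "in_X T p x \<longleftrightarrow>
     (\<forall>k ha hb a. is_hist T ha hb \<longrightarrow> x k ha hb a \<ge> 0) \<and>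
     (\<forall>k. (\<Sum>a\<in>UNIV. x k [] [] a) = p k) \<and>
     (\<forall>k ha hb a b. is_hist (T - 1) ha hb \<longrightarrow>
        (\<Sum>a'\<in>UNIV. x k (ha @ [a]) (hb @ [b]) a') = x k ha hb a)"

definition in_Y :: "nat \<Rightarrow> ('l \<Rightarrow> real) \<Rightarrow> ('l,'a,'b::finite) strat2 \<Rightarrow> bool" where
  "in_Y T q y \<longleftrightarrow>
     (\<forall>l ha hb b. is_hist T ha hb \<longrightarrow> y l ha hb b \<ge> 0) \<and>
     (\<forall>l. (\<Sum>b\<in>UNIV. y l [] [] b) = q l) \<and>
     (\<forall>l ha hb a b. is_hist (T - 1) ha hb \<longrightarrow>
        (\<Sum>b'\<in>UNIV. y l (ha @ [a]) (hb @ [b]) b') = y l ha hb b)"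

definition real_plan1 :: "('k \<Rightarrow> real) \<Rightarrow> ('k,'a,'b) strat1 \<Rightarrow> ('k,'a,'b) strat1" where
  "real_plan1 p \<sigma> k ha hb a = p k * pr1 \<sigma> k ha hb * \<sigma> k ha hb a"

definition real_plan2 :: "('l \<Rightarrow> real) \<Rightarrow> ('l,'a,'b) strat2 \<Rightarrow> ('l,'a,'b) strat2" where
  "real_plan2 q \<tau> l ha hb b = q l * pr2 \<tau> l ha hb * \<tau> l ha hb b"

definition strat_of_plan1 :: "('k,'a::finite,'b) strat1 \<Rightarrow> ('k,'a,'b) strat1" where
  "strat_of_plan1 x k ha hb a =
     (let d = (\<Sum>a'\<in>UNIV. x k ha hb a') in
      if d = 0 then 1 / real (card (UNIV :: 'a set)) else x k ha hb a / d)"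

definition strat_of_plan2 :: "('l,'a,'b::finite) strat2 \<Rightarrow> ('l,'a,'b) strat2" where
  "strat_of_plan2 y l ha hb b =
     (let d = (\<Sum>b'\<in>UNIV. y l ha hb b') in
      if d = 0 then 1 / real (card (UNIV :: 'b set)) else y l ha hb b / d)"

definition optimal_plan1 where
  "optimal_plan1 M lam T p q x \<longleftrightarrow> (\<exists>\<sigma>. security1 M lam T p q \<sigma> \<and>
     (\<forall>k ha hb a. is_hist T ha hb \<longrightarrow> x k ha hb a = real_plan1 p \<sigma> k ha hb a))"

definition optimal_plan2 where
  "optimal_plan2 M lam T p q y \<longleftrightarrow> (\<exists>\<tau>. security2 M lam T p q \<tau> \<and>
     (\<forall>l ha hb b. is_hist T ha hb \<longrightarrow> y l ha hb b = real_plan2 q \<tau> l ha hb b))"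

definition sec_u where
  "sec_u M lam T p x l =
     (INF \<tau>\<in>{\<tau>. is_strat2 T \<tau>}. \<Sum>k\<in>UNIV. p k * cond_payoff M lam T (strat_of_plan1 x) \<tau> k l)"

definition sec_w where
  "sec_w M lam T q y k =
     (SUP \<sigma>\<in>{\<sigma>. is_strat1 T \<sigma>}. \<Sum>l\<in>UNIV. q l * cond_payoff M lam T \<sigma> (strat_of_plan2 y) k l)"

text \<open>Primal LP (player 1). u0 l = u_{l,0}; U l ha hb a b = (u_{l,ha,hb})^{a,b}.\<close>
definition lp1_feasible ::
  "('k::finite \<Rightarrow> 'l::finite \<Rightarrow> 'a::finite \<Rightarrow> 'b::finite \<Rightarrow> real) \<Rightarrow> real \<Rightarrow> nat \<Rightarrow> ('k \<Rightarrow> real) \<Rightarrow>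
   ('k,'a,'b) strat1 \<Rightarrow> ('l \<Rightarrow> real) \<Rightarrow> ('l \<Rightarrow> 'a list \<Rightarrow> 'b list \<Rightarrow> 'a \<Rightarrow> 'b \<Rightarrow> real) \<Rightarrow> bool" where
  "lp1_feasible M lam T p x u0 U \<longleftrightarrow>
     in_X T p x \<and>
     (\<forall>l ha hb a b. length ha = T - 1 \<and> length hb = T - 1 \<longrightarrow> U l ha hb a b = 0) \<and>
     (\<forall>l b'. lam * (\<Sum>k\<in>UNIV. \<Sum>a'\<in>UNIV. M k l a' b' * x k [] [] a')
             + (1 - lam) * (\<Sum>a'\<in>UNIV. U l [] [] a' b') \<ge> u0 l) \<and>
     (\<forall>l ha hb a b b'. is_hist (T - 1) ha hb \<longrightarrow>
        lam * (\<Sum>k\<in>UNIV. \<Sum>a'\<in>UNIV. M k l a' b' * x k (ha @ [a]) (hb @ [b]) a')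
        + (1 - lam) * (\<Sum>a'\<in>UNIV. U l (ha @ [a]) (hb @ [b]) a' b') \<ge> U l ha hb a b)"

definition lp1_optimal where
  "lp1_optimal M lam T p q x u0 U \<longleftrightarrow> lp1_feasible M lam T p x u0 U \<and>
     (\<forall>x' u0' U'. lp1_feasible M lam T p x' u0' U' \<longrightarrow>
        (\<Sum>l\<in>UNIV. q l * u0' l) \<le> (\<Sum>l\<in>UNIV. q l * u0 l))"

text \<open>Dual LP (player 2). w0 k = w_{k,0}; W k ha hb a b = (w_{k,ha,hb})^{a,b}.\<close>
definition lp2_feasible ::
  "('k::finite \<Rightarrow> 'l::finite \<Rightarrow> 'a::finite \<Rightarrow> 'b::finite \<Rightarrow> real) \<Rightarrow> real \<Rightarrow> nat \<Rightarrow> ('l \<Rightarrow> real) \<Rightarrow>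
   ('l,'a,'b) strat2 \<Rightarrow> ('k \<Rightarrow> real) \<Rightarrow> ('k \<Rightarrow> 'a list \<Rightarrow> 'b list \<Rightarrow> 'a \<Rightarrow> 'b \<Rightarrow> real) \<Rightarrow> bool" where
  "lp2_feasible M lam T q y w0 W \<longleftrightarrow>
     in_Y T q y \<and>
     (\<forall>k ha hb a b. length ha = T - 1 \<and> length hb = T - 1 \<longrightarrow> W k ha hb a b = 0) \<and>
     (\<forall>k a'. lam * (\<Sum>l\<in>UNIV. \<Sum>b'\<in>UNIV. M k l a' b' * y l [] [] b')
             + (1 - lam) * (\<Sum>b'\<in>UNIV. W k [] [] a' b') \<le> w0 k) \<and>
     (\<forall>k ha hb a b a'. is_hist (T - 1) ha hb \<longrightarrow>
        lam * (\<Sum>l\<in>UNIV. \<Sum>b'\<in>UNIV. M k l a' b' * y l (ha @ [a]) (hb @ [b]) b')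
        + (1 - lam) * (\<Sum>b'\<in>UNIV. W k (ha @ [a]) (hb @ [b]) a' b') \<le> W k ha hb a b)"

definition lp2_optimal where
  "lp2_optimal M lam T p q y w0 W \<longleftrightarrow> lp2_feasible M lam T q y w0 W \<and>
     (\<forall>y' w0' W'. lp2_feasible M lam T q y' w0' W' \<longrightarrow>
        (\<Sum>k\<in>UNIV. p k * w0 k) \<le> (\<Sum>k\<in>UNIV. p k * w0' k))"

end

theory Submission
  imports Defs
begin

text \<open>In sequence form the payoff of the game is a bilinear function of the two players'
  realization plans, which range over polytopes; the minimax theorem for such payoffs, obtained
  from Farkas' lemma (proved by Fourier--Motzkin elimination), shows that the game has a value.
  For a plan \<open>x\<close> of player 1 and a type \<open>l\<close> of player 2, averaging the constraints of the
  program with the realization plan of any strategy of type \<open>l\<close> and telescoping over the stages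
  bounds \<open>u0 l\<close> by the payoff that strategy concedes. The bound is attained by player 2's best
  reply, computed by backward induction, whose continuation values are feasible. Hence the
  optimum of the program is the value, its \<open>x\<close>-part is an optimal plan and \<open>u0 l\<close> are the
  security payoffs. The second program is the first one for the game with the roles of the players
  exchanged and the payoff negated.\<close>

section \<open>Farkas' lemma\<close>

lemma sum_if_eq_mult [simp]:
  "finite R \<Longrightarrow> r \<in> R \<Longrightarrow> (\<Sum>r'\<in>R. (if r' = r then c else 0) * (F r' :: real)) = c * F r"
  by (simp add: if_distrib[of "\<lambda>u. u * _"] sum.delta' cong: if_cong)

lemma sum_mult_if_eq [simp]:
  "finite R \<Longrightarrow> r \<in> R \<Longrightarrow> (\<Sum>r'\<in>R. (F r' :: real) * (if r = r' then c else 0)) = F r * c"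
  by (simp add: if_distrib[of "\<lambda>u. _ * u"] sum.delta cong: if_cong)

definition fm_combine :: "'i \<Rightarrow> ('i \<Rightarrow> real) \<times> real \<Rightarrow> ('i \<Rightarrow> real) \<times> real \<Rightarrow> ('i \<Rightarrow> real) \<times> real" where
  "fm_combine i0 r s =
     (\<lambda>i. - fst s i0 * fst r i + fst r i0 * fst s i, - fst s i0 * snd r + fst r i0 * snd s)"

definition fm_eliminate :: "'i \<Rightarrow> (('i \<Rightarrow> real) \<times> real) set \<Rightarrow> (('i \<Rightarrow> real) \<times> real) set" where
  "fm_eliminate i0 R = {r\<in>R. fst r i0 = 0} \<union>
     (\<lambda>(r, s). fm_combine i0 r s) ` ({r\<in>R. fst r i0 > 0} \<times> {s\<in>R. fst s i0 < 0})"

lemma finite_fm_eliminate: "finite R \<Longrightarrow> finite (fm_eliminate i0 R)"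
  by (simp add: fm_eliminate_def)

lemma fm_eliminate_coeff: "r \<in> fm_eliminate i0 R \<Longrightarrow> fst r i0 = 0"
  by (auto simp: fm_eliminate_def fm_combine_def)

text \<open>Fourier--Motzkin: a solution of the eliminated system extends to one of the original
  system, by choosing the eliminated coordinate between the lower bounds imposed by the rows with
  negative and the upper bounds imposed by the rows with positive coefficient.\<close>

lemma fm_eliminate_solution_extends:
  fixes R :: "(('i \<Rightarrow> real) \<times> real) set"
  assumes fin: "finite I" "finite R" and i0: "i0 \<notin> I"
    and x: "\<forall>r\<in>fm_eliminate i0 R. (\<Sum>i\<in>I. fst r i * x i) \<le> snd r"
  shows "\<exists>x'. \<forall>r\<in>R. (\<Sum>i\<in>insert i0 I. fst r i * x' i) \<le> snd r"
proof -
  define P where "P = {r\<in>R. fst r i0 > 0}"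
  define N where "N = {r\<in>R. fst r i0 < 0}"
  define bound where "bound r = (snd r - (\<Sum>i\<in>I. fst r i * x i)) / fst r i0" for r
  define t where "t = (if N = {} then (if P = {} then 0 else Min (bound ` P)) else Max (bound ` N))"
  have finPN: "finite P" "finite N" using fin unfolding P_def N_def by auto
  have lower_le_upper: "bound s \<le> bound r" if "s \<in> N" "r \<in> P" for r s
  proof -
    have "fm_combine i0 r s \<in> fm_eliminate i0 R"
      using that unfolding fm_eliminate_def P_def N_def by auto
    then have "(\<Sum>i\<in>I. fst (fm_combine i0 r s) i * x i) \<le> snd (fm_combine i0 r s)"
      using x by blast
    moreover have "(\<Sum>i\<in>I. fst (fm_combine i0 r s) i * x i) =
        - fst s i0 * (\<Sum>i\<in>I. fst r i * x i) + fst r i0 * (\<Sum>i\<in>I. fst s i * x i)"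
      by (simp add: fm_combine_def sum.distrib sum_distrib_left algebra_simps sum_subtractf sum_negf)
    moreover have "fst s i0 < 0" "fst r i0 > 0" using that unfolding N_def P_def by auto
    ultimately show ?thesis unfolding bound_def
      by (simp add: fm_combine_def divide_simps algebra_simps)
  qed
  have t_upper: "t \<le> bound r" if "r \<in> P" for r
    using that finPN lower_le_upper unfolding t_def by (auto simp: Max_le_iff)
  have t_lower: "bound s \<le> t" if "s \<in> N" for s
    using that finPN unfolding t_def by auto
  have "(\<Sum>i\<in>insert i0 I. fst r i * (x(i0 := t)) i) \<le> snd r" if r: "r \<in> R" for r
  proof -
    have "(\<Sum>i\<in>I. fst r i * (x(i0 := t)) i) = (\<Sum>i\<in>I. fst r i * x i)"
      by (rule sum.cong) (use i0 in auto)
    then have eq: "(\<Sum>i\<in>insert i0 I. fst r i * (x(i0 := t)) i) = (\<Sum>i\<in>I. fst r i * x i) + fst r i0 * t"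
      using fin i0 by simp
    consider "fst r i0 = 0" | "fst r i0 > 0" | "fst r i0 < 0" by linarith
    then show ?thesis
    proof cases
      case 1
      then have "r \<in> fm_eliminate i0 R" unfolding fm_eliminate_def using r by auto
      then show ?thesis using x 1 eq by auto
    next
      case 2
      then have "t \<le> bound r" using t_upper r unfolding P_def by auto
      then show ?thesis using 2 eq unfolding bound_def by (simp add: divide_simps algebra_simps mult.commute)
    next
      case 3
      then have "bound r \<le> t" using t_lower r unfolding N_def by auto
      then show ?thesis using 3 eq unfolding bound_def by (simp add: divide_simps algebra_simps mult.commute)
    qed
  qed
  then show ?thesis by blast
qed

lemma fm_eliminate_conic_combination:
  fixes R :: "(('i \<Rightarrow> real) \<times> real) set"
  assumes fin: "finite R" and r': "r' \<in> fm_eliminate i0 R"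
  shows "\<exists>c. (\<forall>r\<in>R. 0 \<le> c r) \<and> (\<forall>i. fst r' i = (\<Sum>r\<in>R. c r * fst r i)) \<and>
             snd r' = (\<Sum>r\<in>R. c r * snd r)"
proof -
  consider "r' \<in> R" | r s where "r \<in> R" "s \<in> R" "fst r i0 > 0" "fst s i0 < 0" "r' = fm_combine i0 r s"
    using r' unfolding fm_eliminate_def by auto
  then show ?thesis
  proof cases
    case 1
    then show ?thesis
      by (intro exI[of _ "\<lambda>r. if r = r' then 1 else 0"]) (use fin in auto)
  next
    case 2
    then have "r \<noteq> s" by auto
    define c where "c r'' = (if r'' = r then - fst s i0 else 0) + (if r'' = s then fst r i0 else 0)" for r''
    have comb: "(\<Sum>r''\<in>R. c r'' * F r'') = - fst s i0 * F r + fst r i0 * F s" for F :: "_ \<Rightarrow> real"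
      using 2 \<open>r \<noteq> s\<close> fin by (simp add: c_def distrib_right sum.distrib)
    have "\<forall>r\<in>R. 0 \<le> c r" using 2 by (simp add: c_def)
    then show ?thesis
      by (intro exI[of _ c] conjI allI)
         (use 2 in \<open>auto simp: comb[of "\<lambda>r. fst r _"] comb[of snd] fm_combine_def\<close>)
  qed
qed

lemma farkas_pairs:
  fixes R :: "(('i \<Rightarrow> real) \<times> real) set"
  assumes "finite I" "finite R" "\<not> (\<exists>x. \<forall>r\<in>R. (\<Sum>i\<in>I. fst r i * x i) \<le> snd r)"
  shows "\<exists>\<mu>. (\<forall>r\<in>R. 0 \<le> \<mu> r) \<and> (\<forall>i\<in>I. (\<Sum>r\<in>R. \<mu> r * fst r i) = 0) \<and> (\<Sum>r\<in>R. \<mu> r * snd r) < 0"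
  using assms
proof (induction I arbitrary: R rule: finite_induct)
  case empty
  then have "\<exists>r\<in>R. snd r < 0" by (simp add: not_le)
  then obtain r where r: "r \<in> R" "snd r < 0" by blast
  show ?case
    by (rule exI[of _ "\<lambda>r'. if r' = r then 1 else 0"]) (use r empty in auto)
next
  case (insert i0 I)
  let ?R' = "fm_eliminate i0 R"
  have "\<not> (\<exists>x. \<forall>r\<in>?R'. (\<Sum>i\<in>I. fst r i * x i) \<le> snd r)"
    using fm_eliminate_solution_extends[OF insert.hyps(1) insert.prems(1) insert.hyps(2)] insert.prems(2)
    by blast
  then obtain \<mu>' where \<mu>': "\<forall>r\<in>?R'. 0 \<le> \<mu>' r" "\<forall>i\<in>I. (\<Sum>r\<in>?R'. \<mu>' r * fst r i) = 0"
      "(\<Sum>r\<in>?R'. \<mu>' r * snd r) < 0"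
    using insert.IH[OF finite_fm_eliminate[OF insert.prems(1)]] by blast
  define c where "c r' = (SOME c. (\<forall>r\<in>R. 0 \<le> c r) \<and> (\<forall>i. fst r' i = (\<Sum>r\<in>R. c r * fst r i)) \<and>
                                  snd r' = (\<Sum>r\<in>R. c r * snd r))" for r'
  have c: "(\<forall>r\<in>R. 0 \<le> c r' r) \<and> (\<forall>i. fst r' i = (\<Sum>r\<in>R. c r' r * fst r i)) \<and>
           snd r' = (\<Sum>r\<in>R. c r' r * snd r)" if "r' \<in> ?R'" for r'
    unfolding c_def using someI_ex[OF fm_eliminate_conic_combination[OF insert.prems(1) that]] .
  define \<mu> where "\<mu> r = (\<Sum>r'\<in>?R'. \<mu>' r' * c r' r)" for r
  have pull_back: "(\<Sum>r\<in>R. \<mu> r * F r) = (\<Sum>r'\<in>?R'. \<mu>' r' * (\<Sum>r\<in>R. c r' r * F r))" for F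
    unfolding \<mu>_def by (simp add: sum_distrib_left sum_distrib_right sum.swap[of _ R] mult.assoc)
  show ?case
  proof (intro exI[of _ \<mu>] conjI ballI)
    fix r assume "r \<in> R" then show "0 \<le> \<mu> r"
      unfolding \<mu>_def using \<mu>'(1) c by (auto intro!: sum_nonneg)
  next
    fix i assume i: "i \<in> insert i0 I"
    have "(\<Sum>r\<in>R. \<mu> r * fst r i) = (\<Sum>r'\<in>?R'. \<mu>' r' * fst r' i)"
      unfolding pull_back by (rule sum.cong) (use c in auto)
    also have "\<dots> = 0"
      using i \<mu>'(2) fm_eliminate_coeff[of _ i0 R] by (cases "i = i0") auto
    finally show "(\<Sum>r\<in>R. \<mu> r * fst r i) = 0" .
  next
    have "(\<Sum>r\<in>R. \<mu> r * snd r) = (\<Sum>r'\<in>?R'. \<mu>' r' * snd r')"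
      unfolding pull_back by (rule sum.cong) (use c in auto)
    then show "(\<Sum>r\<in>R. \<mu> r * snd r) < 0" using \<mu>'(3) by simp
  qed
qed

text \<open>Coinciding rows split the multiplier of their common pair equally.\<close>

lemma farkas:
  fixes A :: "'r \<Rightarrow> 'i \<Rightarrow> real" and b :: "'r \<Rightarrow> real"
  assumes "finite I" "finite Rs" "\<not> (\<exists>x. \<forall>r\<in>Rs. (\<Sum>i\<in>I. A r i * x i) \<le> b r)"
  shows "\<exists>\<mu>. (\<forall>r\<in>Rs. 0 \<le> \<mu> r) \<and> (\<forall>i\<in>I. (\<Sum>r\<in>Rs. \<mu> r * A r i) = 0) \<and> (\<Sum>r\<in>Rs. \<mu> r * b r) < 0"
proof -
  define g where "g r = (A r, b r)" for r
  define R where "R = g ` Rs"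
  obtain \<mu>0 where \<mu>0: "\<forall>r\<in>R. 0 \<le> \<mu>0 r" "\<forall>i\<in>I. (\<Sum>r\<in>R. \<mu>0 r * fst r i) = 0"
      "(\<Sum>r\<in>R. \<mu>0 r * snd r) < 0"
    using farkas_pairs[OF assms(1), of R] assms(2,3) unfolding R_def g_def by auto
  define mult where "mult r = real (card {r'\<in>Rs. g r' = g r})" for r
  define \<mu> where "\<mu> r = \<mu>0 (g r) / mult r" for r
  have mult_pos: "mult r > 0" if "r \<in> Rs" for r
    unfolding mult_def using that assms(2) by (auto simp: card_gt_0_iff)
  have push_forward: "(\<Sum>r\<in>Rs. \<mu> r * F (g r)) = (\<Sum>y\<in>R. \<mu>0 y * F y)" for F :: "_ \<Rightarrow> real"
  proof -
    have "(\<Sum>r\<in>Rs. \<mu> r * F (g r)) = (\<Sum>y\<in>R. \<Sum>r\<in>{r\<in>Rs. g r = y}. \<mu> r * F (g r))"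
      unfolding R_def by (rule sum.image_gen[OF assms(2)])
    also have "\<dots> = (\<Sum>y\<in>R. \<mu>0 y * F y)"
    proof (rule sum.cong[OF refl])
      fix y assume "y \<in> R"
      then obtain r0 where r0: "r0 \<in> Rs" "g r0 = y" unfolding R_def by auto
      have "(\<Sum>r\<in>{r\<in>Rs. g r = y}. \<mu> r * F (g r)) = mult r0 * (\<mu>0 y / mult r0 * F y)"
        by (simp add: \<mu>_def mult_def r0(2)[symmetric])
      then show "(\<Sum>r\<in>{r\<in>Rs. g r = y}. \<mu> r * F (g r)) = \<mu>0 y * F y"
        using mult_pos[OF r0(1)] by simp
    qed
    finally show ?thesis .
  qed
  show ?thesis
  proof (intro exI[of _ \<mu>] conjI ballI)
    fix r assume "r \<in> Rs" then show "0 \<le> \<mu> r"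
      using \<mu>0(1) mult_pos[of r] unfolding \<mu>_def R_def by auto
  next
    fix i assume "i \<in> I"
    then show "(\<Sum>r\<in>Rs. \<mu> r * A r i) = 0"
      using push_forward[of "\<lambda>y. fst y i"] \<mu>0(2) by (simp add: g_def)
  next
    show "(\<Sum>r\<in>Rs. \<mu> r * b r) < 0"
      using push_forward[of snd] \<mu>0(3) by (simp add: g_def)
  qed
qed

section \<open>A minimax theorem for bilinear payoffs on polyhedra\<close>

definition in_polyhedron :: "'i set \<Rightarrow> 'r set \<Rightarrow> ('r \<Rightarrow> 'i \<Rightarrow> real) \<Rightarrow> ('r \<Rightarrow> real) \<Rightarrow> ('i \<Rightarrow> real) \<Rightarrow> bool" where
  "in_polyhedron I R A b x \<longleftrightarrow> (\<forall>r\<in>R. (\<Sum>i\<in>I. A r i * x i) \<le> b r)"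

definition bilinear :: "'i set \<Rightarrow> 'j set \<Rightarrow> ('i \<Rightarrow> 'j \<Rightarrow> real) \<Rightarrow> ('i \<Rightarrow> real) \<Rightarrow> ('j \<Rightarrow> real) \<Rightarrow> real" where
  "bilinear I J C x y = (\<Sum>i\<in>I. \<Sum>j\<in>J. x i * C i j * y j)"

lemma bilinear_eq_sum_left: "bilinear I J C x y = (\<Sum>i\<in>I. x i * (\<Sum>j\<in>J. C i j * y j))"
  unfolding bilinear_def by (simp add: sum_distrib_left mult.assoc)

lemma bilinear_eq_sum_right: "bilinear I J C x y = (\<Sum>j\<in>J. y j * (\<Sum>i\<in>I. x i * C i j))"
  unfolding bilinear_def by (subst sum.swap) (simp add: sum_distrib_left mult.commute mult.left_commute)

lemma bilinear_add_left: "bilinear I J C (\<lambda>i. x i + t * d i) y = bilinear I J C x y + t * bilinear I J C d y"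
  unfolding bilinear_def by (simp add: algebra_simps sum.distrib sum_distrib_left)

lemma bilinear_add_right: "bilinear I J C x (\<lambda>j. y j + t * d j) = bilinear I J C x y + t * bilinear I J C x d"
  unfolding bilinear_def by (simp add: algebra_simps sum.distrib sum_distrib_left)

lemma bilinear_scale_left: "bilinear I J C (\<lambda>i. c * x i) y = c * bilinear I J C x y"
  unfolding bilinear_def by (simp add: algebra_simps sum_distrib_left)

lemma bilinear_scale_right: "bilinear I J C x (\<lambda>j. c * y j) = c * bilinear I J C x y"
  unfolding bilinear_def by (simp add: algebra_simps sum_distrib_left)

lemma in_polyhedron_weak_duality:
  assumes "in_polyhedron I R A b x" "\<forall>r\<in>R. 0 \<le> \<nu> r"
  shows "(\<Sum>i\<in>I. x i * (\<Sum>r\<in>R. \<nu> r * A r i)) \<le> (\<Sum>r\<in>R. \<nu> r * b r)"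
proof -
  have "(\<Sum>i\<in>I. x i * (\<Sum>r\<in>R. \<nu> r * A r i)) = (\<Sum>r\<in>R. \<nu> r * (\<Sum>i\<in>I. A r i * x i))"
    by (simp add: sum_distrib_left sum.swap[of _ I] mult.commute mult.left_commute)
  also have "\<dots> \<le> (\<Sum>r\<in>R. \<nu> r * b r)"
    using assms unfolding in_polyhedron_def by (intro sum_mono mult_left_mono) auto
  finally show ?thesis .
qed

lemma in_polyhedron_add_ray:
  assumes "in_polyhedron I R A b x" "\<forall>r\<in>R. (\<Sum>i\<in>I. A r i * d i) \<le> 0" "0 \<le> t"
  shows "in_polyhedron I R A b (\<lambda>i. x i + t * d i)"
  unfolding in_polyhedron_def
proof
  fix r assume r: "r \<in> R"
  have "(\<Sum>i\<in>I. A r i * (x i + t * d i)) = (\<Sum>i\<in>I. A r i * x i) + t * (\<Sum>i\<in>I. A r i * d i)"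
    by (simp add: algebra_simps sum.distrib sum_distrib_left)
  moreover have "t * (\<Sum>i\<in>I. A r i * d i) \<le> 0" using assms(2,3) r by (simp add: mult_nonneg_nonpos)
  ultimately show "(\<Sum>i\<in>I. A r i * (x i + t * d i)) \<le> b r"
    using assms(1) r unfolding in_polyhedron_def by fastforce
qed

lemma in_polyhedron_homogenized:
  assumes "\<forall>r\<in>R. (\<Sum>i\<in>I. A r i * e i) \<le> \<theta> * b r" "0 < \<theta>"
  shows "in_polyhedron I R A b (\<lambda>i. e i / \<theta>)"
  unfolding in_polyhedron_def
proof
  fix r assume "r \<in> R"
  then have "(\<Sum>i\<in>I. A r i * e i) / \<theta> \<le> b r"
    using assms by (simp add: divide_simps mult.commute)
  then show "(\<Sum>i\<in>I. A r i * (e i / \<theta>)) \<le> b r"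
    by (simp add: sum_divide_distrib)
qed

lemma saddle_point_of_dual_solutions:
  assumes x: "in_polyhedron I RX G g x" and y: "in_polyhedron J RY H h y"
    and \<nu>: "\<forall>r\<in>RX. 0 \<le> \<nu> r" and \<mu>: "\<forall>r\<in>RY. 0 \<le> \<mu> r"
    and dual_x: "\<forall>j\<in>J. (\<Sum>i\<in>I. x i * C i j) = - (\<Sum>r\<in>RY. \<mu> r * H r j)"
    and dual_y: "\<forall>i\<in>I. (\<Sum>j\<in>J. C i j * y j) = (\<Sum>r\<in>RX. \<nu> r * G r i)"
    and gap: "(\<Sum>r\<in>RX. \<nu> r * g r) + (\<Sum>r\<in>RY. \<mu> r * h r) \<le> 0"
  shows "\<forall>y'. in_polyhedron J RY H h y' \<longrightarrow> (\<Sum>r\<in>RX. \<nu> r * g r) \<le> bilinear I J C x y'"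
    and "\<forall>x'. in_polyhedron I RX G g x' \<longrightarrow> bilinear I J C x' y \<le> (\<Sum>r\<in>RX. \<nu> r * g r)"
proof -
  show "\<forall>y'. in_polyhedron J RY H h y' \<longrightarrow> (\<Sum>r\<in>RX. \<nu> r * g r) \<le> bilinear I J C x y'"
  proof (intro allI impI)
    fix y' assume y': "in_polyhedron J RY H h y'"
    have "bilinear I J C x y' = - (\<Sum>j\<in>J. y' j * (\<Sum>r\<in>RY. \<mu> r * H r j))"
      unfolding bilinear_eq_sum_right using dual_x by (simp add: sum_negf)
    moreover have "(\<Sum>j\<in>J. y' j * (\<Sum>r\<in>RY. \<mu> r * H r j)) \<le> (\<Sum>r\<in>RY. \<mu> r * h r)"
      by (rule in_polyhedron_weak_duality[OF y' \<mu>])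
    ultimately show "(\<Sum>r\<in>RX. \<nu> r * g r) \<le> bilinear I J C x y'" using gap by linarith
  qed
  show "\<forall>x'. in_polyhedron I RX G g x' \<longrightarrow> bilinear I J C x' y \<le> (\<Sum>r\<in>RX. \<nu> r * g r)"
  proof (intro allI impI)
    fix x' assume x': "in_polyhedron I RX G g x'"
    have "bilinear I J C x' y = (\<Sum>i\<in>I. x' i * (\<Sum>r\<in>RX. \<nu> r * G r i))"
      unfolding bilinear_eq_sum_left using dual_y by simp
    also have "\<dots> \<le> (\<Sum>r\<in>RX. \<nu> r * g r)" by (rule in_polyhedron_weak_duality[OF x' \<nu>])
    finally show "bilinear I J C x' y \<le> (\<Sum>r\<in>RX. \<nu> r * g r)" .
  qed
qed

lemma bounded_bilinear_recession_right:
  assumes X: "in_polyhedron I RX G g x" and Y: "in_polyhedron J RY H h y"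
    and bounded: "\<And>x y. in_polyhedron I RX G g x \<Longrightarrow> in_polyhedron J RY H h y \<Longrightarrow> \<bar>bilinear I J C x y\<bar> \<le> B"
    and ray: "\<forall>r\<in>RY. (\<Sum>j\<in>J. H r j * d j) \<le> 0"
  shows "0 \<le> bilinear I J C x d"
proof (rule ccontr)
  assume neg: "\<not> 0 \<le> bilinear I J C x d"
  define t where "t = (B + 1 + \<bar>bilinear I J C x y\<bar>) / - bilinear I J C x d"
  have "0 \<le> B" using bounded[OF X Y] by linarith
  then have t: "0 \<le> t" unfolding t_def using neg by (intro divide_nonneg_pos) auto
  have "bilinear I J C x (\<lambda>j. y j + t * d j) = bilinear I J C x y - (B + 1 + \<bar>bilinear I J C x y\<bar>)"
    using neg unfolding bilinear_add_right t_def by simp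
  then show False using bounded[OF X in_polyhedron_add_ray[OF Y ray t]] by linarith
qed

lemma bounded_bilinear_recession_left:
  assumes X: "in_polyhedron I RX G g x" and Y: "in_polyhedron J RY H h y"
    and bounded: "\<And>x y. in_polyhedron I RX G g x \<Longrightarrow> in_polyhedron J RY H h y \<Longrightarrow> \<bar>bilinear I J C x y\<bar> \<le> B"
    and ray: "\<forall>r\<in>RX. (\<Sum>i\<in>I. G r i * d i) \<le> 0"
  shows "bilinear I J C d y \<le> 0"
proof (rule ccontr)
  assume pos: "\<not> bilinear I J C d y \<le> 0"
  define t where "t = (B + 1 + \<bar>bilinear I J C x y\<bar>) / bilinear I J C d y"
  have "0 \<le> B" using bounded[OF X Y] by linarith
  then have t: "0 \<le> t" unfolding t_def using pos by (intro divide_nonneg_pos) auto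
  have "bilinear I J C (\<lambda>i. x i + t * d i) y = bilinear I J C x y + (B + 1 + \<bar>bilinear I J C x y\<bar>)"
    using pos unfolding bilinear_add_left t_def by simp
  then show False using bounded[OF in_polyhedron_add_ray[OF X ray t] Y] by linarith
qed

text \<open>The Farkas certificate for the saddle point system contradicts boundedness: if \<open>\<theta> > 0\<close> it
  yields points \<open>e/\<theta>\<close>, \<open>gg/\<theta>\<close> violating the certificate's own strict inequality; if \<open>\<theta> = 0\<close>,
  then \<open>e\<close> and \<open>gg\<close> are recession directions.\<close>

lemma saddle_certificate_absurd:
  assumes X: "in_polyhedron I RX G g x0" and Y: "in_polyhedron J RY H h y0"
    and bounded: "\<And>x y. in_polyhedron I RX G g x \<Longrightarrow> in_polyhedron J RY H h y \<Longrightarrow> \<bar>bilinear I J C x y\<bar> \<le> B"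
    and \<alpha>: "\<forall>r\<in>RX. 0 \<le> \<alpha> r" and \<kappa>: "\<forall>r\<in>RY. 0 \<le> \<kappa> r" and \<theta>: "0 \<le> \<theta>"
    and rec_y: "\<forall>r\<in>RY. (\<Sum>j\<in>J. H r j * gg j) \<le> \<theta> * h r"
    and rec_x: "\<forall>r\<in>RX. (\<Sum>i\<in>I. G r i * e i) \<le> \<theta> * g r"
    and dual_gg: "\<forall>i\<in>I. (\<Sum>r\<in>RX. \<alpha> r * G r i) = (\<Sum>j\<in>J. C i j * gg j)"
    and dual_e: "\<forall>j\<in>J. (\<Sum>r\<in>RY. \<kappa> r * H r j) = - (\<Sum>i\<in>I. e i * C i j)"
    and neg: "(\<Sum>r\<in>RX. \<alpha> r * g r) + (\<Sum>r\<in>RY. \<kappa> r * h r) < 0"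
  shows False
proof -
  have gap: "bilinear I J C x gg < bilinear I J C e y"
    if x: "in_polyhedron I RX G g x" and y: "in_polyhedron J RY H h y" for x y
  proof -
    have "bilinear I J C x gg = (\<Sum>i\<in>I. x i * (\<Sum>r\<in>RX. \<alpha> r * G r i))"
      unfolding bilinear_eq_sum_left using dual_gg by simp
    also have "\<dots> \<le> (\<Sum>r\<in>RX. \<alpha> r * g r)" by (rule in_polyhedron_weak_duality[OF x \<alpha>])
    finally have 1: "bilinear I J C x gg \<le> (\<Sum>r\<in>RX. \<alpha> r * g r)" .
    have "- bilinear I J C e y = (\<Sum>j\<in>J. y j * (\<Sum>r\<in>RY. \<kappa> r * H r j))"
      unfolding bilinear_eq_sum_right using dual_e by (simp add: sum_negf)
    also have "\<dots> \<le> (\<Sum>r\<in>RY. \<kappa> r * h r)" by (rule in_polyhedron_weak_duality[OF y \<kappa>])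
    finally show ?thesis using 1 neg by linarith
  qed
  show False
  proof (cases "\<theta> > 0")
    case True
    let ?x = "\<lambda>i. e i / \<theta>" and ?y = "\<lambda>j. gg j / \<theta>"
    have "gg = (\<lambda>j. \<theta> * ?y j)" "e = (\<lambda>i. \<theta> * ?x i)" using True by auto
    then have "bilinear I J C ?x gg = bilinear I J C e ?y"
      by (metis bilinear_scale_left bilinear_scale_right)
    then show False
      using gap[OF in_polyhedron_homogenized[OF rec_x True] in_polyhedron_homogenized[OF rec_y True]]
      by simp
  next
    case False
    then have "\<forall>r\<in>RY. (\<Sum>j\<in>J. H r j * gg j) \<le> 0" "\<forall>r\<in>RX. (\<Sum>i\<in>I. G r i * e i) \<le> 0"
      using \<theta> rec_x rec_y by auto
    then show False
      using bounded_bilinear_recession_right[OF X Y bounded] bounded_bilinear_recession_left[OF X Y bounded]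
        gap[OF X Y] by fastforce
  qed
qed

text \<open>The saddle point system in the unknowns \<open>x, \<mu>, y, \<nu>\<close>: \<open>x \<in> X\<close> and \<open>y \<in> Y\<close> (rows
  \<open>PX, PY\<close>), \<open>\<mu>, \<nu> \<ge> 0\<close> (rows \<open>DMu, DNu\<close>), the dual constraints of
  \<open>min\<^sub>y x C y\<close> and \<open>max\<^sub>x x C y\<close> as pairs of opposite inequalities (rows \<open>EqX, EqY\<close>),
  and a nonpositive duality gap (row \<open>Gap\<close>).\<close>

datatype ('i, 'j, 'rx, 'ry) saddle_var = VX 'i | VMu 'ry | VY 'j | VNu 'rx

datatype ('i, 'j, 'rx, 'ry) saddle_row =
  PX 'rx | DMu 'ry | EqX_le 'j | EqX_ge 'j | PY 'ry | DNu 'rx | EqY_le 'i | EqY_ge 'i | Gap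

fun saddle_matrix :: "('rx \<Rightarrow> 'i \<Rightarrow> real) \<Rightarrow> ('rx \<Rightarrow> real) \<Rightarrow> ('ry \<Rightarrow> 'j \<Rightarrow> real) \<Rightarrow> ('ry \<Rightarrow> real) \<Rightarrow>
    ('i \<Rightarrow> 'j \<Rightarrow> real) \<Rightarrow> ('i, 'j, 'rx, 'ry) saddle_row \<Rightarrow> ('i, 'j, 'rx, 'ry) saddle_var \<Rightarrow> real" where
  "saddle_matrix G g H h C (PX r) (VX i) = G r i"
| "saddle_matrix G g H h C (DMu r) (VMu r') = (if r' = r then -1 else 0)"
| "saddle_matrix G g H h C (EqX_le j) (VMu r) = H r j"
| "saddle_matrix G g H h C (EqX_le j) (VX i) = C i j"
| "saddle_matrix G g H h C (EqX_ge j) (VMu r) = - H r j"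
| "saddle_matrix G g H h C (EqX_ge j) (VX i) = - C i j"
| "saddle_matrix G g H h C (PY r) (VY j) = H r j"
| "saddle_matrix G g H h C (DNu r) (VNu r') = (if r' = r then -1 else 0)"
| "saddle_matrix G g H h C (EqY_le i) (VNu r) = G r i"
| "saddle_matrix G g H h C (EqY_le i) (VY j) = - C i j"
| "saddle_matrix G g H h C (EqY_ge i) (VNu r) = - G r i"
| "saddle_matrix G g H h C (EqY_ge i) (VY j) = C i j"
| "saddle_matrix G g H h C Gap (VNu r) = g r"
| "saddle_matrix G g H h C Gap (VMu r) = h r"
| "saddle_matrix G g H h C _ _ = 0"

fun saddle_rhs :: "('rx \<Rightarrow> real) \<Rightarrow> ('ry \<Rightarrow> real) \<Rightarrow> ('i, 'j, 'rx, 'ry) saddle_row \<Rightarrow> real" where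
  "saddle_rhs g h (PX r) = g r"
| "saddle_rhs g h (PY r) = h r"
| "saddle_rhs g h _ = 0"

definition saddle_vars :: "'i set \<Rightarrow> 'j set \<Rightarrow> 'rx set \<Rightarrow> 'ry set \<Rightarrow> ('i, 'j, 'rx, 'ry) saddle_var set" where
  "saddle_vars I J RX RY = VX ` I \<union> VMu ` RY \<union> VY ` J \<union> VNu ` RX"

definition saddle_rows :: "'i set \<Rightarrow> 'j set \<Rightarrow> 'rx set \<Rightarrow> 'ry set \<Rightarrow> ('i, 'j, 'rx, 'ry) saddle_row set" where
  "saddle_rows I J RX RY = insert Gap (PX ` RX \<union> DMu ` RY \<union> EqX_le ` J \<union> EqX_ge ` J \<union>
     PY ` RY \<union> DNu ` RX \<union> EqY_le ` I \<union> EqY_ge ` I)"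

lemma sum_saddle_vars:
  assumes "finite I" "finite J" "finite RX" "finite RY"
  shows "(\<Sum>v\<in>saddle_vars I J RX RY. F v) =
    (\<Sum>i\<in>I. F (VX i)) + (\<Sum>r\<in>RY. F (VMu r)) + (\<Sum>j\<in>J. F (VY j)) + (\<Sum>r\<in>RX. F (VNu r))"
proof -
  have d: "(VX ` I \<union> VMu ` RY \<union> VY ` J) \<inter> VNu ` RX = {}" "(VX ` I \<union> VMu ` RY) \<inter> VY ` J = {}"
    "VX ` I \<inter> VMu ` RY = {}" by auto
  show ?thesis
    using assms unfolding saddle_vars_def
    by (simp add: sum.union_disjoint[OF _ _ d(1)] sum.union_disjoint[OF _ _ d(2)]
        sum.union_disjoint[OF _ _ d(3)] sum.reindex inj_on_def)
qed

lemma sum_saddle_rows: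
  assumes "finite I" "finite J" "finite RX" "finite RY"
  shows "(\<Sum>v\<in>saddle_rows I J RX RY. F v) =
    F Gap + ((\<Sum>r\<in>RX. F (PX r)) + (\<Sum>r\<in>RY. F (DMu r)) + (\<Sum>j\<in>J. F (EqX_le j)) + (\<Sum>j\<in>J. F (EqX_ge j))
    + (\<Sum>r\<in>RY. F (PY r)) + (\<Sum>r\<in>RX. F (DNu r)) + (\<Sum>i\<in>I. F (EqY_le i)) + (\<Sum>i\<in>I. F (EqY_ge i)))"
proof -
  have d: "Gap \<notin> PX ` RX \<union> DMu ` RY \<union> EqX_le ` J \<union> EqX_ge ` J \<union> PY ` RY \<union> DNu ` RX \<union> EqY_le ` I \<union> EqY_ge ` I"
    "(PX ` RX \<union> DMu ` RY \<union> EqX_le ` J \<union> EqX_ge ` J \<union> PY ` RY \<union> DNu ` RX \<union> EqY_le ` I) \<inter> EqY_ge ` I = {}"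
    "(PX ` RX \<union> DMu ` RY \<union> EqX_le ` J \<union> EqX_ge ` J \<union> PY ` RY \<union> DNu ` RX) \<inter> EqY_le ` I = {}"
    "(PX ` RX \<union> DMu ` RY \<union> EqX_le ` J \<union> EqX_ge ` J \<union> PY ` RY) \<inter> DNu ` RX = {}"
    "(PX ` RX \<union> DMu ` RY \<union> EqX_le ` J \<union> EqX_ge ` J) \<inter> PY ` RY = {}"
    "(PX ` RX \<union> DMu ` RY \<union> EqX_le ` J) \<inter> EqX_ge ` J = {}"
    "(PX ` RX \<union> DMu ` RY) \<inter> EqX_le ` J = {}"
    "PX ` RX \<inter> DMu ` RY = {}" by auto
  show ?thesis
    using assms unfolding saddle_rows_def
    by (simp add: sum.insert[OF _ d(1)] sum.union_disjoint[OF _ _ d(2)]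
        sum.union_disjoint[OF _ _ d(3)] sum.union_disjoint[OF _ _ d(4)] sum.union_disjoint[OF _ _ d(5)]
        sum.union_disjoint[OF _ _ d(6)] sum.union_disjoint[OF _ _ d(7)] sum.union_disjoint[OF _ _ d(8)]
        sum.reindex inj_on_def)
qed

lemma saddle_system_solution:
  assumes fin: "finite I" "finite J" "finite RX" "finite RY"
    and z: "\<forall>\<rho>\<in>saddle_rows I J RX RY.
      (\<Sum>v\<in>saddle_vars I J RX RY. saddle_matrix G g H h C \<rho> v * z v) \<le> saddle_rhs g h \<rho>"
  shows "\<exists>x y v. in_polyhedron I RX G g x \<and> in_polyhedron J RY H h y \<and>
     (\<forall>y'. in_polyhedron J RY H h y' \<longrightarrow> v \<le> bilinear I J C x y') \<and>
     (\<forall>x'. in_polyhedron I RX G g x' \<longrightarrow> bilinear I J C x' y \<le> v)"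
proof -
  define x where "x i = z (VX i)" for i
  define \<mu> where "\<mu> r = z (VMu r)" for r
  define y where "y j = z (VY j)" for j
  define \<nu> where "\<nu> r = z (VNu r)" for r
  have row: "(\<Sum>v\<in>saddle_vars I J RX RY. saddle_matrix G g H h C \<rho> v * z v) \<le> saddle_rhs g h \<rho>"
    if "\<rho> \<in> saddle_rows I J RX RY" for \<rho>
    using z that by blast
  note simps = saddle_rows_def sum_saddle_vars[OF fin] x_def y_def \<mu>_def \<nu>_def
  have x: "in_polyhedron I RX G g x"
    unfolding in_polyhedron_def using row[of "PX _"] by (simp add: simps)
  have y: "in_polyhedron J RY H h y"
    unfolding in_polyhedron_def using row[of "PY _"] by (simp add: simps)
  have \<mu>: "\<forall>r\<in>RY. 0 \<le> \<mu> r"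
  proof
    fix r assume "r \<in> RY" then show "0 \<le> \<mu> r" using row[of "DMu r"] fin by (simp add: simps)
  qed
  have \<nu>: "\<forall>r\<in>RX. 0 \<le> \<nu> r"
  proof
    fix r assume "r \<in> RX" then show "0 \<le> \<nu> r" using row[of "DNu r"] fin by (simp add: simps)
  qed
  have dual_x: "\<forall>j\<in>J. (\<Sum>i\<in>I. x i * C i j) = - (\<Sum>r\<in>RY. \<mu> r * H r j)"
  proof
    fix j assume j: "j \<in> J"
    have "(\<Sum>i\<in>I. C i j * x i) + (\<Sum>r\<in>RY. H r j * \<mu> r) \<le> 0"
      using row[of "EqX_le j"] j by (simp add: simps)
    moreover have "- (\<Sum>i\<in>I. C i j * x i) - (\<Sum>r\<in>RY. H r j * \<mu> r) \<le> 0"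
      using row[of "EqX_ge j"] j by (simp add: simps sum_negf)
    ultimately show "(\<Sum>i\<in>I. x i * C i j) = - (\<Sum>r\<in>RY. \<mu> r * H r j)"
      by (simp add: mult.commute)
  qed
  have dual_y: "\<forall>i\<in>I. (\<Sum>j\<in>J. C i j * y j) = (\<Sum>r\<in>RX. \<nu> r * G r i)"
  proof
    fix i assume i: "i \<in> I"
    have "(\<Sum>r\<in>RX. G r i * \<nu> r) - (\<Sum>j\<in>J. C i j * y j) \<le> 0"
      using row[of "EqY_le i"] i by (simp add: simps sum_negf)
    moreover have "- (\<Sum>r\<in>RX. G r i * \<nu> r) + (\<Sum>j\<in>J. C i j * y j) \<le> 0"
      using row[of "EqY_ge i"] i by (simp add: simps sum_negf)
    ultimately show "(\<Sum>j\<in>J. C i j * y j) = (\<Sum>r\<in>RX. \<nu> r * G r i)"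
      by (simp add: mult.commute)
  qed
  have gap: "(\<Sum>r\<in>RX. \<nu> r * g r) + (\<Sum>r\<in>RY. \<mu> r * h r) \<le> 0"
    using row[of Gap] by (simp add: simps mult.commute)
  show ?thesis
    using saddle_point_of_dual_solutions[OF x y \<nu> \<mu> dual_x dual_y gap] x y by blast
qed

lemma saddle_system_feasible:
  assumes fin: "finite I" "finite J" "finite RX" "finite RY"
    and X: "in_polyhedron I RX G g x0" and Y: "in_polyhedron J RY H h y0"
    and bounded: "\<And>x y. in_polyhedron I RX G g x \<Longrightarrow> in_polyhedron J RY H h y \<Longrightarrow> \<bar>bilinear I J C x y\<bar> \<le> B"
  shows "\<exists>z. \<forall>\<rho>\<in>saddle_rows I J RX RY.
      (\<Sum>v\<in>saddle_vars I J RX RY. saddle_matrix G g H h C \<rho> v * z v) \<le> saddle_rhs g h \<rho>"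
proof (rule ccontr)
  let ?A = "saddle_matrix G g H h C" and ?V = "saddle_vars I J RX RY" and ?R = "saddle_rows I J RX RY"
  assume "\<not> ?thesis"
  moreover have "finite ?V" "finite ?R" using fin by (auto simp: saddle_vars_def saddle_rows_def)
  ultimately obtain \<mu> where \<mu>: "\<forall>\<rho>\<in>?R. 0 \<le> \<mu> \<rho>" "\<forall>v\<in>?V. (\<Sum>\<rho>\<in>?R. \<mu> \<rho> * ?A \<rho> v) = 0"
      "(\<Sum>\<rho>\<in>?R. \<mu> \<rho> * saddle_rhs g h \<rho>) < 0"
    using farkas[of ?V ?R ?A "saddle_rhs g h"] by blast
  note sums = sum_saddle_rows[OF fin] saddle_vars_def sum_negf
  have col: "(\<Sum>\<rho>\<in>?R. \<mu> \<rho> * ?A \<rho> v) = 0" if "v \<in> ?V" for v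
    using \<mu>(2) that by blast
  have nonneg: "0 \<le> \<mu> \<rho>" if "\<rho> \<in> ?R" for \<rho>
    using \<mu>(1) that by blast
  define e where "e i = \<mu> (EqY_ge i) - \<mu> (EqY_le i)" for i
  define gg where "gg j = \<mu> (EqX_ge j) - \<mu> (EqX_le j)" for j
  show False
  proof (rule saddle_certificate_absurd[OF X Y bounded, of "\<lambda>r. \<mu> (PX r)" "\<lambda>r. \<mu> (PY r)" "\<mu> Gap"])
    show "\<forall>r\<in>RX. 0 \<le> \<mu> (PX r)" "\<forall>r\<in>RY. 0 \<le> \<mu> (PY r)" "0 \<le> \<mu> Gap"
      using nonneg by (auto simp: saddle_rows_def)
    show "\<forall>r\<in>RY. (\<Sum>j\<in>J. H r j * gg j) \<le> \<mu> Gap * h r"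
    proof
      fix r assume r: "r \<in> RY"
      have "\<mu> Gap * h r + (- \<mu> (DMu r) + (\<Sum>j\<in>J. \<mu> (EqX_le j) * H r j) - (\<Sum>j\<in>J. \<mu> (EqX_ge j) * H r j)) = 0"
        using col[of "VMu r"] r fin by (simp add: sums)
      moreover have "0 \<le> \<mu> (DMu r)" using nonneg r by (simp add: saddle_rows_def)
      ultimately show "(\<Sum>j\<in>J. H r j * gg j) \<le> \<mu> Gap * h r"
        unfolding gg_def by (simp add: algebra_simps sum_subtractf)
    qed
    show "\<forall>r\<in>RX. (\<Sum>i\<in>I. G r i * e i) \<le> \<mu> Gap * g r"
    proof
      fix r assume r: "r \<in> RX"
      have "\<mu> Gap * g r + (- \<mu> (DNu r) + (\<Sum>i\<in>I. \<mu> (EqY_le i) * G r i) - (\<Sum>i\<in>I. \<mu> (EqY_ge i) * G r i)) = 0"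
        using col[of "VNu r"] r fin by (simp add: sums)
      moreover have "0 \<le> \<mu> (DNu r)" using nonneg r by (simp add: saddle_rows_def)
      ultimately show "(\<Sum>i\<in>I. G r i * e i) \<le> \<mu> Gap * g r"
        unfolding e_def by (simp add: algebra_simps sum_subtractf)
    qed
    show "\<forall>i\<in>I. (\<Sum>r\<in>RX. \<mu> (PX r) * G r i) = (\<Sum>j\<in>J. C i j * gg j)"
    proof
      fix i assume i: "i \<in> I"
      have "(\<Sum>r\<in>RX. \<mu> (PX r) * G r i) + (\<Sum>j\<in>J. \<mu> (EqX_le j) * C i j) - (\<Sum>j\<in>J. \<mu> (EqX_ge j) * C i j) = 0"
        using col[of "VX i"] i fin by (simp add: sums)
      then show "(\<Sum>r\<in>RX. \<mu> (PX r) * G r i) = (\<Sum>j\<in>J. C i j * gg j)"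
        unfolding gg_def by (simp add: algebra_simps sum_subtractf)
    qed
    show "\<forall>j\<in>J. (\<Sum>r\<in>RY. \<mu> (PY r) * H r j) = - (\<Sum>i\<in>I. e i * C i j)"
    proof
      fix j assume j: "j \<in> J"
      have "(\<Sum>r\<in>RY. \<mu> (PY r) * H r j) - (\<Sum>i\<in>I. \<mu> (EqY_le i) * C i j) + (\<Sum>i\<in>I. \<mu> (EqY_ge i) * C i j) = 0"
        using col[of "VY j"] j fin by (simp add: sums)
      then show "(\<Sum>r\<in>RY. \<mu> (PY r) * H r j) = - (\<Sum>i\<in>I. e i * C i j)"
        unfolding e_def by (simp add: algebra_simps sum_subtractf)
    qed
    show "(\<Sum>r\<in>RX. \<mu> (PX r) * g r) + (\<Sum>r\<in>RY. \<mu> (PY r) * h r) < 0"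
      using \<mu>(3) by (simp add: sums)
  qed
qed

theorem minimax_polyhedra:
  assumes "finite I" "finite J" "finite RX" "finite RY"
    and "in_polyhedron I RX G g x0" and "in_polyhedron J RY H h y0"
    and "\<And>x y. in_polyhedron I RX G g x \<Longrightarrow> in_polyhedron J RY H h y \<Longrightarrow> \<bar>bilinear I J C x y\<bar> \<le> B"
  shows "\<exists>x y v. in_polyhedron I RX G g x \<and> in_polyhedron J RY H h y \<and>
     (\<forall>y'. in_polyhedron J RY H h y' \<longrightarrow> v \<le> bilinear I J C x y') \<and>
     (\<forall>x'. in_polyhedron I RX G g x' \<longrightarrow> bilinear I J C x' y \<le> v)"
  using saddle_system_solution[OF assms(1-4)] saddle_system_feasible[OF assms] by blast

section \<open>Plays, strategies and realization plans\<close>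

lemma finite_lists_length[simp]: "finite {xs::'a::finite list. length xs = n}"
  using finite_lists_length_eq[of "UNIV::'a set" n] by simp

lemma sum_lists_length_Suc:
  "(\<Sum>xs\<in>{xs::'a::finite list. length xs = Suc n}. F xs) = (\<Sum>xs\<in>{xs. length xs = n}. \<Sum>a\<in>UNIV. F (xs @ [a]))"
proof -
  have img: "{xs::'a list. length xs = Suc n} = (\<lambda>(xs,a). xs @ [a]) ` ({xs. length xs = n} \<times> UNIV)"
  proof (rule set_eqI, rule iffI)
    fix ys :: "'a list" assume "ys \<in> {xs. length xs = Suc n}"
    then have "ys \<noteq> []" "length (butlast ys) = n" by auto
    then have "ys = butlast ys @ [last ys]" by simp
    then show "ys \<in> (\<lambda>(xs,a). xs @ [a]) ` ({xs. length xs = n} \<times> UNIV)"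
      using \<open>length (butlast ys) = n\<close> by (auto intro!: image_eqI[of _ _ "(butlast ys, last ys)"])
  qed auto
  have inj: "inj_on (\<lambda>(xs,a). xs @ [a]) ({xs::'a list. length xs = n} \<times> UNIV)"
    by (auto simp: inj_on_def)
  show ?thesis
    unfolding img sum.reindex[OF inj] by (simp add: sum.cartesian_product case_prod_unfold)
qed

lemma pr1_snoc:
  assumes "length h = length h'"
  shows "pr1 \<sigma> k (h @ [a]) (h' @ [b]) = pr1 \<sigma> k h h' * \<sigma> k h h' a"
proof -
  have "pr1 \<sigma> k (h @ [a]) (h' @ [b]) = (\<Prod>s<Suc (length h). \<sigma> k (take s (h @ [a])) (take s (h' @ [b])) ((h @ [a]) ! s))"
    by (simp add: pr1_def)
  also have "\<dots> = (\<Prod>s<length h. \<sigma> k (take s (h @ [a])) (take s (h' @ [b])) ((h @ [a]) ! s)) * \<sigma> k h h' a"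
    using assms by (simp add: nth_append)
  also have "(\<Prod>s<length h. \<sigma> k (take s (h @ [a])) (take s (h' @ [b])) ((h @ [a]) ! s)) = pr1 \<sigma> k h h'"
    unfolding pr1_def by (rule prod.cong) (use assms in \<open>auto simp: nth_append\<close>)
  finally show ?thesis .
qed

lemma pr2_snoc:
  assumes "length h = length h'"
  shows "pr2 \<tau> l (h @ [a]) (h' @ [b]) = pr2 \<tau> l h h' * \<tau> l h h' b"
proof -
  have "pr2 \<tau> l (h @ [a]) (h' @ [b]) = (\<Prod>s<Suc (length h'). \<tau> l (take s (h @ [a])) (take s (h' @ [b])) ((h' @ [b]) ! s))"
    by (simp add: pr2_def)
  also have "\<dots> = (\<Prod>s<length h'. \<tau> l (take s (h @ [a])) (take s (h' @ [b])) ((h' @ [b]) ! s)) * \<tau> l h h' b"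
    using assms by (simp add: nth_append)
  also have "(\<Prod>s<length h'. \<tau> l (take s (h @ [a])) (take s (h' @ [b])) ((h' @ [b]) ! s)) = pr2 \<tau> l h h'"
    unfolding pr2_def by (rule prod.cong) (use assms in \<open>auto simp: nth_append\<close>)
  finally show ?thesis .
qed

lemma pr1_Nil [simp]: "pr1 \<sigma> k [] [] = 1" by (simp add: pr1_def)

lemma pr2_Nil [simp]: "pr2 \<tau> l [] [] = 1" by (simp add: pr2_def)

lemma is_distr_nonneg: "is_distr d \<Longrightarrow> 0 \<le> d x" by (simp add: is_distr_def)

lemma sum_plays_Suc:
  fixes \<sigma> :: "('k,'a::finite,'b::finite) strat1" and \<tau> :: "('l,'a,'b) strat2"
  assumes s: "is_strat1 T \<sigma>" and t: "is_strat2 T \<tau>" and n: "n < T"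
  shows "(\<Sum>ha\<in>{ha. length ha = Suc n}. \<Sum>hb\<in>{hb. length hb = Suc n}.
            pr1 \<sigma> k ha hb * pr2 \<tau> l ha hb * G (take n ha) (take n hb))
       = (\<Sum>ha\<in>{ha. length ha = n}. \<Sum>hb\<in>{hb. length hb = n}. pr1 \<sigma> k ha hb * pr2 \<tau> l ha hb * G ha hb)"
proof -
  have "(\<Sum>ha\<in>{ha. length ha = Suc n}. \<Sum>hb\<in>{hb. length hb = Suc n}.
            pr1 \<sigma> k ha hb * pr2 \<tau> l ha hb * G (take n ha) (take n hb))
     = (\<Sum>ha\<in>{ha. length ha = n}. \<Sum>hb\<in>{hb. length hb = n}. \<Sum>a\<in>UNIV. \<Sum>b\<in>UNIV.
            pr1 \<sigma> k ha hb * pr2 \<tau> l ha hb * G ha hb * (\<sigma> k ha hb a * \<tau> l ha hb b))"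
    unfolding sum_lists_length_Suc
    by (subst sum.swap[of _ UNIV]) (simp add: pr1_snoc pr2_snoc mult_ac)
  also have "\<dots> = (\<Sum>ha\<in>{ha. length ha = n}. \<Sum>hb\<in>{hb. length hb = n}.
            pr1 \<sigma> k ha hb * pr2 \<tau> l ha hb * G ha hb * ((\<Sum>a\<in>UNIV. \<sigma> k ha hb a) * (\<Sum>b\<in>UNIV. \<tau> l ha hb b)))"
    unfolding sum_product by (simp only: sum_distrib_left)
  also have "\<dots> = (\<Sum>ha\<in>{ha. length ha = n}. \<Sum>hb\<in>{hb. length hb = n}. pr1 \<sigma> k ha hb * pr2 \<tau> l ha hb * G ha hb)"
    using s t n by (intro sum.cong refl) (simp add: is_strat1_def is_strat2_def is_distr_def is_hist_def)
  finally show ?thesis .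
qed
lemma sum_plays_prefix:
  fixes \<sigma> :: "('k,'a::finite,'b::finite) strat1" and \<tau> :: "('l,'a,'b) strat2"
  assumes s: "is_strat1 T \<sigma>" and t: "is_strat2 T \<tau>" and mn: "m \<le> n" and nT: "n \<le> T"
  shows "(\<Sum>ha\<in>{ha. length ha = n}. \<Sum>hb\<in>{hb. length hb = n}. pr1 \<sigma> k ha hb * pr2 \<tau> l ha hb * F (take m ha) (take m hb))
       = (\<Sum>ha\<in>{ha. length ha = m}. \<Sum>hb\<in>{hb. length hb = m}. pr1 \<sigma> k ha hb * pr2 \<tau> l ha hb * F ha hb)"
  using mn nT
proof (induction n rule: dec_induct)
  case base
  show ?case by (intro sum.cong) auto
next
  case (step n)
  have "(\<Sum>ha\<in>{ha. length ha = Suc n}. \<Sum>hb\<in>{hb. length hb = Suc n}.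
          pr1 \<sigma> k ha hb * pr2 \<tau> l ha hb * F (take m ha) (take m hb))
      = (\<Sum>ha\<in>{ha. length ha = Suc n}. \<Sum>hb\<in>{hb. length hb = Suc n}.
          pr1 \<sigma> k ha hb * pr2 \<tau> l ha hb * F (take m (take n ha)) (take m (take n hb)))"
    using step.hyps by (simp add: min_absorb1)
  also have "\<dots> = (\<Sum>ha\<in>{ha. length ha = n}. \<Sum>hb\<in>{hb. length hb = n}.
          pr1 \<sigma> k ha hb * pr2 \<tau> l ha hb * F (take m ha) (take m hb))"
    using sum_plays_Suc[OF s t, of n k l "\<lambda>h h'. F (take m h) (take m h')"] step.prems by simp
  finally show ?case using step.IH step.prems by simp
qed

definition cond_plan1 :: "('k,'a,'b) strat1 \<Rightarrow> 'k \<Rightarrow> 'a list \<Rightarrow> 'b list \<Rightarrow> 'a \<Rightarrow> real" where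
  "cond_plan1 \<sigma> k h h' a = pr1 \<sigma> k h h' * \<sigma> k h h' a"
definition cond_plan2 :: "('l,'a,'b) strat2 \<Rightarrow> 'l \<Rightarrow> 'a list \<Rightarrow> 'b list \<Rightarrow> 'b \<Rightarrow> real" where
  "cond_plan2 \<tau> l h h' b = pr2 \<tau> l h h' * \<tau> l h h' b"

lemma expected_stage_payoff:
  fixes \<sigma> :: "('k,'a::finite,'b::finite) strat1" and \<tau> :: "('l,'a,'b) strat2"
  assumes s: "is_strat1 T \<sigma>" and t: "is_strat2 T \<tau>" and sT: "s < T"
  shows "(\<Sum>ha\<in>{ha. length ha = T}. \<Sum>hb\<in>{hb. length hb = T}.
            pr1 \<sigma> k ha hb * pr2 \<tau> l ha hb * M k l (ha ! s) (hb ! s)) =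
         (\<Sum>h\<in>{h. length h = s}. \<Sum>h'\<in>{h'. length h' = s}. \<Sum>a\<in>UNIV. \<Sum>b\<in>UNIV.
            M k l a b * cond_plan1 \<sigma> k h h' a * cond_plan2 \<tau> l h h' b)"
proof -
  have "(\<Sum>ha\<in>{ha. length ha = T}. \<Sum>hb\<in>{hb. length hb = T}.
            pr1 \<sigma> k ha hb * pr2 \<tau> l ha hb * M k l (ha ! s) (hb ! s)) =
        (\<Sum>ha\<in>{ha. length ha = T}. \<Sum>hb\<in>{hb. length hb = T}.
            pr1 \<sigma> k ha hb * pr2 \<tau> l ha hb * M k l (take (Suc s) ha ! s) (take (Suc s) hb ! s))"
    by (intro sum.cong refl) (use sT in auto)
  also have "\<dots> = (\<Sum>ha\<in>{ha. length ha = Suc s}. \<Sum>hb\<in>{hb. length hb = Suc s}.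
            pr1 \<sigma> k ha hb * pr2 \<tau> l ha hb * M k l (ha ! s) (hb ! s))"
    using sum_plays_prefix[OF s t, of "Suc s" T k l "\<lambda>g g'. M k l (g ! s) (g' ! s)"] sT by simp
  also have "\<dots> = (\<Sum>h\<in>{h. length h = s}. \<Sum>a\<in>UNIV. \<Sum>h'\<in>{h'. length h' = s}. \<Sum>b\<in>UNIV.
            M k l a b * cond_plan1 \<sigma> k h h' a * cond_plan2 \<tau> l h h' b)"
    unfolding sum_lists_length_Suc
    by (intro sum.cong refl) (simp add: pr1_snoc pr2_snoc cond_plan1_def cond_plan2_def nth_append)
  also have "\<dots> = (\<Sum>h\<in>{h. length h = s}. \<Sum>h'\<in>{h'. length h' = s}. \<Sum>a\<in>UNIV. \<Sum>b\<in>UNIV.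
            M k l a b * cond_plan1 \<sigma> k h h' a * cond_plan2 \<tau> l h h' b)"
    by (intro sum.cong refl) (rule sum.swap)
  finally show ?thesis .
qed

lemma cond_payoff_sequence_form:
  fixes \<sigma> :: "('k,'a::finite,'b::finite) strat1" and \<tau> :: "('l,'a,'b) strat2"
  assumes s: "is_strat1 T \<sigma>" and t: "is_strat2 T \<tau>"
  shows "cond_payoff M lam T \<sigma> \<tau> k l = (\<Sum>s<T. lam * (1 - lam) ^ s *
     (\<Sum>h\<in>{h. length h = s}. \<Sum>h'\<in>{h'. length h' = s}. \<Sum>a\<in>UNIV. \<Sum>b\<in>UNIV.
        M k l a b * cond_plan1 \<sigma> k h h' a * cond_plan2 \<tau> l h h' b))"
proof -
  have "cond_payoff M lam T \<sigma> \<tau> k l = (\<Sum>s<T. lam * (1 - lam) ^ s *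
      (\<Sum>ha\<in>{ha. length ha = T}. \<Sum>hb\<in>{hb. length hb = T}.
         pr1 \<sigma> k ha hb * pr2 \<tau> l ha hb * M k l (ha ! s) (hb ! s)))"
    unfolding cond_payoff_def
    by (simp add: sum_distrib_left sum.swap[of _ "{..<T}"] mult.commute mult.left_commute)
  then show ?thesis
    by (simp add: expected_stage_payoff[OF s t])
qed

lemma pr1_nonneg:
  assumes s: "is_strat1 T \<sigma>" and h: "is_hist T h h'"
  shows "0 \<le> pr1 \<sigma> k h h'"
proof -
  have "\<forall>s<length h. is_hist T (take s h) (take s h')" using h by (auto simp: is_hist_def)
  then show ?thesis unfolding pr1_def using s
    by (intro prod_nonneg) (auto simp: is_strat1_def is_distr_def)
qed

lemma in_X_real_plan1:
  fixes \<sigma> :: "('k,'a::finite,'b) strat1"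
  assumes s: "is_strat1 T \<sigma>" and p: "\<forall>k. 0 \<le> p k" and T: "0 < T"
  shows "in_X T p (real_plan1 p \<sigma>)"
  unfolding in_X_def
proof (intro conjI allI impI)
  fix k and ha :: "'a list" and hb :: "'b list" and a assume h: "is_hist T ha hb"
  then show "0 \<le> real_plan1 p \<sigma> k ha hb a"
    using s p pr1_nonneg[OF s h] unfolding real_plan1_def is_strat1_def is_distr_def by simp
next
  fix k
  have "is_hist T ([]::'a list) ([]::'b list)" using T by (simp add: is_hist_def)
  then have "is_distr (\<sigma> k [] [])" using s by (simp add: is_strat1_def)
  then show "(\<Sum>a\<in>UNIV. real_plan1 p \<sigma> k [] [] a) = p k"
    unfolding real_plan1_def is_distr_def by (simp add: sum_distrib_left[symmetric])
next
  fix k and ha :: "'a list" and hb :: "'b list" and a b assume h: "is_hist (T - 1) ha hb"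
  then have h1: "is_hist T (ha @ [a]) (hb @ [b])" and hl: "length ha = length hb"
    by (auto simp: is_hist_def)
  show "(\<Sum>a'\<in>UNIV. real_plan1 p \<sigma> k (ha @ [a]) (hb @ [b]) a') = real_plan1 p \<sigma> k ha hb a"
    using s h1 unfolding real_plan1_def is_strat1_def is_distr_def
    by (simp add: sum_distrib_left[symmetric] pr1_snoc[OF hl] mult.assoc)
qed

lemma plan_eq_mass_times_strat_of_plan1:
  fixes x :: "('k,'a::finite,'b) strat1"
  assumes nn: "\<forall>a. 0 \<le> x k h h' a"
  shows "x k h h' a = (\<Sum>a'\<in>UNIV. x k h h' a') * strat_of_plan1 x k h h' a"
proof (cases "(\<Sum>a'\<in>UNIV. x k h h' a') = 0")
  case True
  then have "x k h h' a = 0" using nn by (simp add: sum_nonneg_eq_0_iff)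
  then show ?thesis using True by simp
next
  case False
  then show ?thesis by (simp add: strat_of_plan1_def Let_def)
qed

lemma is_strat1_strat_of_plan1:
  fixes x :: "('k,'a::finite,'b) strat1"
  assumes x: "in_X T p x"
  shows "is_strat1 T (strat_of_plan1 x)"
  unfolding is_strat1_def
proof (intro allI impI)
  fix k and ha :: "'a list" and hb :: "'b list" assume h: "is_hist T ha hb"
  have nn: "\<forall>a. 0 \<le> x k ha hb a" using x h by (simp add: in_X_def)
  then have d: "0 \<le> (\<Sum>a'\<in>UNIV. x k ha hb a')" by (simp add: sum_nonneg)
  have 1: "\<forall>a. 0 \<le> strat_of_plan1 x k ha hb a"
    using nn d by (simp add: strat_of_plan1_def Let_def)
  have 2: "(\<Sum>a\<in>UNIV. strat_of_plan1 x k ha hb a) = 1"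
  proof (cases "(\<Sum>a'\<in>UNIV. x k ha hb a') = 0")
    case True then show ?thesis by (simp add: strat_of_plan1_def Let_def)
  next
    case False then show ?thesis by (simp add: strat_of_plan1_def Let_def sum_divide_distrib[symmetric])
  qed
  show "is_distr (strat_of_plan1 x k ha hb)" using 1 2 by (simp add: is_distr_def)
qed

lemma sum_plan_eq_pr1_strat_of_plan1:
  fixes x :: "('k,'a::finite,'b) strat1"
  assumes x: "in_X T p x" and h: "is_hist T h h'"
  shows "(\<Sum>a\<in>UNIV. x k h h' a) = p k * pr1 (strat_of_plan1 x) k h h'"
  using h
proof (induction h arbitrary: h' rule: rev_induct)
  case Nil
  then show ?case using x by (simp add: in_X_def is_hist_def)
next
  case (snoc a g)
  then obtain g' b where h': "h' = g' @ [b]"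
    by (metis is_hist_def length_greater_0_conv rev_exhaust snoc_eq_iff_butlast)
  have hist: "is_hist (T - 1) g g'" and histT: "is_hist T g g'"
    using snoc.prems unfolding h' by (auto simp: is_hist_def)
  have "(\<Sum>a'\<in>UNIV. x k (g @ [a]) h' a') = x k g g' a"
    using x hist unfolding h' in_X_def by blast
  also have "\<dots> = (\<Sum>a'\<in>UNIV. x k g g' a') * strat_of_plan1 x k g g' a"
    by (rule plan_eq_mass_times_strat_of_plan1) (use x histT in \<open>simp add: in_X_def\<close>)
  also have "\<dots> = p k * pr1 (strat_of_plan1 x) k (g @ [a]) h'"
    using snoc.IH[OF histT] histT unfolding h' by (simp add: pr1_snoc is_hist_def)
  finally show ?case .
qed

lemma real_plan1_strat_of_plan1:
  fixes x :: "('k,'a::finite,'b) strat1"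
  assumes x: "in_X T p x" and h: "is_hist T h h'"
  shows "real_plan1 p (strat_of_plan1 x) k h h' a = x k h h' a"
proof -
  have "x k h h' a = (\<Sum>a'\<in>UNIV. x k h h' a') * strat_of_plan1 x k h h' a"
    by (rule plan_eq_mass_times_strat_of_plan1) (use x h in \<open>simp add: in_X_def\<close>)
  also have "\<dots> = p k * pr1 (strat_of_plan1 x) k h h' * strat_of_plan1 x k h h' a"
    using sum_plan_eq_pr1_strat_of_plan1[OF x h] by simp
  finally show ?thesis by (simp add: real_plan1_def)
qed

definition swap_roles :: "('k \<Rightarrow> 'x \<Rightarrow> 'y \<Rightarrow> 'c \<Rightarrow> 'r) \<Rightarrow> 'k \<Rightarrow> 'y \<Rightarrow> 'x \<Rightarrow> 'c \<Rightarrow> 'r" where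
  "swap_roles f k y x = f k x y"

lemma swap_roles_swap_roles[simp]: "swap_roles (swap_roles f) = f" by (simp add: swap_roles_def fun_eq_iff)
lemma swap_roles_apply[simp]: "swap_roles f k y x = f k x y" by (simp add: swap_roles_def)

lemma pr1_swap_roles[simp]: "pr1 (swap_roles \<tau>) l hb ha = pr2 \<tau> l ha hb"
  by (simp add: pr1_def pr2_def)
lemma pr2_swap_roles[simp]: "pr2 (swap_roles \<sigma>) k hb ha = pr1 \<sigma> k ha hb"
  by (simp add: pr1_def pr2_def)
lemma is_strat1_swap_roles[simp]: "is_strat1 T (swap_roles \<tau>) = is_strat2 T \<tau>"
  unfolding is_strat1_def is_strat2_def by (auto simp: is_hist_def)
lemma is_strat2_swap_roles[simp]: "is_strat2 T (swap_roles \<sigma>) = is_strat1 T \<sigma>"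
  unfolding is_strat1_def is_strat2_def by (auto simp: is_hist_def)

lemma in_X_swap_roles[simp]: "in_X T q (swap_roles y) = in_Y T q y"
  unfolding in_X_def in_Y_def by (auto simp: is_hist_def)
lemma in_Y_swap_roles[simp]: "in_Y T p (swap_roles x) = in_X T p x"
  unfolding in_X_def in_Y_def by (auto simp: is_hist_def)

lemma strat_of_plan1_swap_roles: "strat_of_plan1 (swap_roles y) = swap_roles (strat_of_plan2 y)"
  by (simp add: fun_eq_iff strat_of_plan1_def strat_of_plan2_def)
lemma real_plan1_swap_roles: "real_plan1 q (swap_roles \<tau>) = swap_roles (real_plan2 q \<tau>)"
  by (simp add: fun_eq_iff real_plan1_def real_plan2_def)
lemma real_plan2_swap_roles: "real_plan2 p (swap_roles \<sigma>) = swap_roles (real_plan1 p \<sigma>)"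
  by (simp add: fun_eq_iff real_plan1_def real_plan2_def)

definition opp_game :: "('k \<Rightarrow> 'l \<Rightarrow> 'a \<Rightarrow> 'b \<Rightarrow> real) \<Rightarrow> 'l \<Rightarrow> 'k \<Rightarrow> 'b \<Rightarrow> 'a \<Rightarrow> real" where
  "opp_game M l k b a = - M k l a b"

lemma cond_payoff_opp_game:
  "cond_payoff (opp_game M) lam T (swap_roles \<tau>) (swap_roles \<sigma>) l k = - cond_payoff M lam T \<sigma> \<tau> k l"
  unfolding cond_payoff_def
  by (subst sum.swap) (simp add: opp_game_def sum_negf mult.commute)

lemma payoff_opp_game:
  "payoff (opp_game M) lam T q p (swap_roles \<tau>) (swap_roles \<sigma>) = - payoff M lam T p q \<sigma> \<tau>"
  unfolding payoff_def cond_payoff_opp_game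
  by (subst sum.swap) (simp add: sum_negf mult.commute)

lemma in_Y_real_plan2:
  assumes "is_strat2 T \<tau>" "\<forall>l. 0 \<le> q l" "0 < T"
  shows "in_Y T q (real_plan2 q \<tau>)"
  using in_X_real_plan1[of T "swap_roles \<tau>" q] assms by (simp add: real_plan1_swap_roles)

lemma is_strat2_strat_of_plan2:
  assumes "in_Y T q y"
  shows "is_strat2 T (strat_of_plan2 y)"
  using is_strat1_strat_of_plan1[of T q "swap_roles y"] assms by (simp add: strat_of_plan1_swap_roles)

lemma real_plan2_strat_of_plan2:
  assumes y: "in_Y T q y" and h: "is_hist T h h'"
  shows "real_plan2 q (strat_of_plan2 y) l h h' b = y l h h' b"
  using real_plan1_strat_of_plan1[of T q "swap_roles y" h' h l b] y h by (simp add: strat_of_plan1_swap_roles real_plan1_swap_roles is_hist_def)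

lemma is_distr_le_1:
  fixes d :: "'x::finite \<Rightarrow> real"
  assumes "is_distr d" shows "d x \<le> 1"
proof -
  have "d x \<le> (\<Sum>y\<in>UNIV. d y)" using assms by (intro member_le_sum) (auto simp: is_distr_def)
  then show ?thesis using assms by (simp add: is_distr_def)
qed

lemma pr1_le_1:
  assumes s: "is_strat1 T \<sigma>" and h: "is_hist T h h'"
  shows "pr1 \<sigma> k h h' \<le> 1"
proof -
  have "\<forall>s<length h. is_hist T (take s h) (take s h')" using h by (auto simp: is_hist_def)
  then have "\<forall>s<length h. is_distr (\<sigma> k (take s h) (take s h'))" using s by (simp add: is_strat1_def)
  then show ?thesis unfolding pr1_def
    by (intro prod_le_1) (auto simp: is_distr_le_1 is_distr_nonneg)
qed

lemma plan_bounds: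
  fixes x :: "('k,'a::finite,'b) strat1"
  assumes x: "in_X T p x" and h: "is_hist T h h'" and p: "0 \<le> p k"
  shows "0 \<le> x k h h' a \<and> x k h h' a \<le> p k"
proof -
  have nn: "\<forall>a. 0 \<le> x k h h' a" using x h by (simp add: in_X_def)
  have s: "is_strat1 T (strat_of_plan1 x)" by (rule is_strat1_strat_of_plan1[OF x])
  have "x k h h' a \<le> (\<Sum>a'\<in>UNIV. x k h h' a')" using nn by (intro member_le_sum) auto
  also have "\<dots> = p k * pr1 (strat_of_plan1 x) k h h'" by (rule sum_plan_eq_pr1_strat_of_plan1[OF x h])
  also have "\<dots> \<le> p k * 1" using pr1_le_1[OF s h] p by (intro mult_left_mono) auto
  finally show ?thesis using nn by simp
qed

definition uniform1 :: "('k,'a::finite,'b) strat1" where "uniform1 k h h' a = 1 / real (card (UNIV::'a set))"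
definition uniform2 :: "('l,'a,'b::finite) strat2" where "uniform2 l h h' b = 1 / real (card (UNIV::'b set))"

lemma is_strat1_uniform1: "is_strat1 T uniform1"
  by (simp add: is_strat1_def is_distr_def uniform1_def)
lemma is_strat2_uniform2: "is_strat2 T uniform2"
  by (simp add: is_strat2_def is_distr_def uniform2_def)

section \<open>The sequence form and the value\<close>

text \<open>A realization plan of player 1 as a vector indexed by \<open>(s, h\<^sup>A, h\<^sup>B, k, a)\<close> with
  \<open>length h\<^sup>A = length h\<^sup>B = s < T\<close>; the redundant stage \<open>s\<close> grades the index set by stage.\<close>

definition plan_index :: "nat \<Rightarrow> (nat \<times> 'a list \<times> 'b list \<times> 'k \<times> 'a) set" where
  "plan_index T = (SIGMA s:{..<T}. {h. length h = s} \<times> {h'. length h' = s} \<times> UNIV \<times> UNIV)"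

definition cons_index :: "nat \<Rightarrow> ('k \<times> 'a list \<times> 'b list \<times> 'a \<times> 'b) set" where
  "cons_index T = {(k, h, h', a, b). length h = length h' \<and> length h < T - 1}"

definition plan_vec :: "('k, 'a, 'b) strat1 \<Rightarrow> nat \<times> 'a list \<times> 'b list \<times> 'k \<times> 'a \<Rightarrow> real" where
  "plan_vec x = (\<lambda>(s, h, h', k, a). x k h h' a)"

definition vec_plan :: "(nat \<times> 'a list \<times> 'b list \<times> 'k \<times> 'a \<Rightarrow> real) \<Rightarrow> ('k, 'a, 'b) strat1" where
  "vec_plan z k h h' a = z (length h, h, h', k, a)"

lemma vec_plan_plan_vec [simp]: "vec_plan (plan_vec x) = x"
  by (simp add: vec_plan_def plan_vec_def fun_eq_iff)

definition signed :: "bool \<Rightarrow> real \<Rightarrow> real" where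
  "signed pos t = (if pos then t else - t)"

lemma all_signed_le_iff: "(\<forall>pos. signed pos s \<le> signed pos t) \<longleftrightarrow> s = t"
proof
  assume "\<forall>pos. signed pos s \<le> signed pos t"
  then have "signed True s \<le> signed True t" "signed False s \<le> signed False t" by blast+
  then show "s = t" by (simp add: signed_def)
qed (simp add: signed_def)

lemma signed_zero [simp]: "signed pos 0 = 0"
  by (simp add: signed_def)

lemma all_signed_nonpos_iff: "(\<forall>pos. signed pos s \<le> 0) \<longleftrightarrow> s = 0"
  using all_signed_le_iff[of s 0] by simp

lemma sum_signed_mult: "(\<Sum>i\<in>I. signed pos (f i) * x i) = signed pos (\<Sum>i\<in>I. f i * x i)"
  by (simp add: signed_def sum_negf)

text \<open>The constraints of \<open>X\<^sub>T(p)\<close> as a system of inequalities, each equality as the pair of rows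
  \<open>Root True k, Root False k\<close> resp. \<open>Extend True c, Extend False c\<close>.\<close>

datatype ('k, 'a, 'b) plan_row =
  Nonneg "nat \<times> 'a list \<times> 'b list \<times> 'k \<times> 'a" | Root bool 'k | Extend bool "'k \<times> 'a list \<times> 'b list \<times> 'a \<times> 'b"

fun plan_matrix :: "('k, 'a, 'b) plan_row \<Rightarrow> nat \<times> 'a list \<times> 'b list \<times> 'k \<times> 'a \<Rightarrow> real" where
  "plan_matrix (Nonneg c) i = (if i = c then -1 else 0)"
| "plan_matrix (Root pos k) i = signed pos (if i \<in> range (\<lambda>a. (0, [], [], k, a)) then 1 else 0)"
| "plan_matrix (Extend pos (k, h, h', a, b)) i = signed pos
     ((if i \<in> range (\<lambda>a'. (Suc (length h), h @ [a], h' @ [b], k, a')) then 1 else 0)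
      - (if i = (length h, h, h', k, a) then 1 else 0))"

fun plan_rhs :: "('k \<Rightarrow> real) \<Rightarrow> ('k, 'a, 'b) plan_row \<Rightarrow> real" where
  "plan_rhs p (Root pos k) = signed pos (p k)"
| "plan_rhs p _ = 0"

definition plan_rows :: "nat \<Rightarrow> ('k, 'a, 'b) plan_row set" where
  "plan_rows T = Nonneg ` plan_index T \<union> range (case_prod Root) \<union> case_prod Extend ` (UNIV \<times> cons_index T)"

abbreviation plan_polyhedron :: "nat \<Rightarrow> ('k \<Rightarrow> real) \<Rightarrow> (nat \<times> 'a list \<times> 'b list \<times> 'k \<times> 'a \<Rightarrow> real) \<Rightarrow> bool" where
  "plan_polyhedron T p \<equiv> in_polyhedron (plan_index T) (plan_rows T) plan_matrix (plan_rhs p)"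

lemma finite_lists_length_less [simp]: "finite {xs::'a::finite list. length xs < n}"
proof -
  have "{xs::'a list. length xs < n} \<subseteq> {xs. set xs \<subseteq> UNIV \<and> length xs \<le> n}" by auto
  then show ?thesis using finite_lists_length_le[of "UNIV::'a set" n] finite_subset by auto
qed

lemma finite_plan_index [simp]:
  "finite (plan_index T :: (nat \<times> 'a::finite list \<times> 'b::finite list \<times> 'k::finite \<times> 'a) set)"
  unfolding plan_index_def by (intro finite_SigmaI) auto

lemma finite_cons_index [simp]:
  "finite (cons_index T :: ('k::finite \<times> 'a::finite list \<times> 'b::finite list \<times> 'a \<times> 'b) set)"
proof -
  have "cons_index T \<subseteq> UNIV \<times> {h::'a list. length h < T} \<times> {h'::'b list. length h' < T} \<times> UNIV \<times> UNIV"
    unfolding cons_index_def by auto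
  then show ?thesis by (rule finite_subset) auto
qed

lemma finite_plan_rows [simp]: "finite (plan_rows T :: ('k::finite, 'a::finite, 'b::finite) plan_row set)"
  unfolding plan_rows_def by auto

lemma sum_range_if:
  fixes f :: "'z::finite \<Rightarrow> 'i"
  assumes "finite S" "inj f" "range f \<subseteq> S"
  shows "(\<Sum>j\<in>S. if j \<in> range f then G j else (0::real)) = (\<Sum>z\<in>UNIV. G (f z))"
proof -
  have "(\<Sum>j\<in>S. if j \<in> range f then G j else 0) = (\<Sum>j\<in>S \<inter> range f. G j)"
    using assms(1) by (simp add: sum.inter_restrict)
  also have "S \<inter> range f = range f" using assms(3) by auto
  also have "(\<Sum>j\<in>range f. G j) = (\<Sum>z\<in>UNIV. G (f z))" using assms(2) by (simp add: sum.reindex)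
  finally show ?thesis .
qed

lemma sum_range_indicator:
  fixes f :: "'z::finite \<Rightarrow> 'i"
  assumes "finite S" "inj f" "range f \<subseteq> S"
  shows "(\<Sum>i\<in>S. (if i \<in> range f then 1 else 0) * (x i :: real)) = (\<Sum>z\<in>UNIV. x (f z))"
proof -
  have "(\<Sum>i\<in>S. (if i \<in> range f then 1 else 0) * x i) = (\<Sum>i\<in>S. if i \<in> range f then x i else 0)"
    by (rule sum.cong) auto
  then show ?thesis using sum_range_if[OF assms, of x] by simp
qed

lemma sum_plan_matrix_Nonneg:
  fixes x :: "nat \<times> 'a::finite list \<times> 'b::finite list \<times> 'k::finite \<times> 'a \<Rightarrow> real"
  shows "c \<in> plan_index T \<Longrightarrow> (\<Sum>i\<in>plan_index T. plan_matrix (Nonneg c) i * x i) = - x c"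
  by simp

lemma sum_plan_matrix_Root:
  fixes x :: "nat \<times> 'a::finite list \<times> 'b::finite list \<times> 'k::finite \<times> 'a \<Rightarrow> real"
  assumes "0 < T"
  shows "(\<Sum>i\<in>plan_index T. plan_matrix (Root pos k) i * x i) = signed pos (\<Sum>a\<in>UNIV. x (0, [], [], k, a))"
  unfolding plan_matrix.simps sum_signed_mult
  by (subst sum_range_indicator) (use assms in \<open>auto simp: plan_index_def inj_on_def\<close>)

lemma sum_plan_matrix_Extend:
  fixes x :: "nat \<times> 'a::finite list \<times> 'b::finite list \<times> 'k::finite \<times> 'a \<Rightarrow> real"
  assumes c: "(k, h, h', a, b) \<in> cons_index T"
  shows "(\<Sum>i\<in>plan_index T. plan_matrix (Extend pos (k, h, h', a, b)) i * x i) =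
    signed pos ((\<Sum>a'\<in>UNIV. x (Suc (length h), h @ [a], h' @ [b], k, a')) - x (length h, h, h', k, a))"
proof -
  have "(length h, h, h', k, a) \<in> plan_index T" using c by (auto simp: cons_index_def plan_index_def)
  moreover have "(\<Sum>i\<in>plan_index T. (if i \<in> range (\<lambda>a'. (Suc (length h), h @ [a], h' @ [b], k, a')) then 1 else 0) * x i)
      = (\<Sum>a'\<in>UNIV. x (Suc (length h), h @ [a], h' @ [b], k, a'))"
    by (rule sum_range_indicator) (use c in \<open>auto simp: plan_index_def cons_index_def inj_on_def\<close>)
  ultimately show ?thesis
    by (simp only: plan_matrix.simps sum_signed_mult left_diff_distrib sum_subtractf) simp
qed

lemma plan_polyhedron_iff:
  fixes x :: "nat \<times> 'a::finite list \<times> 'b::finite list \<times> 'k::finite \<times> 'a \<Rightarrow> real"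
  assumes T: "0 < T"
  shows "plan_polyhedron T p x \<longleftrightarrow>
    (\<forall>c\<in>plan_index T. 0 \<le> x c) \<and> (\<forall>k. (\<Sum>a\<in>UNIV. x (0, [], [], k, a)) = p k) \<and>
    (\<forall>(k, h, h', a, b)\<in>cons_index T. (\<Sum>a'\<in>UNIV. x (Suc (length h), h @ [a], h' @ [b], k, a')) = x (length h, h, h', k, a))"
proof -
  define row where "row r \<longleftrightarrow> (\<Sum>i\<in>plan_index T. plan_matrix r i * x i) \<le> plan_rhs p r" for r
  have "(\<forall>r\<in>Nonneg ` plan_index T. row r) \<longleftrightarrow> (\<forall>c\<in>plan_index T. 0 \<le> x c)"
    by (simp add: row_def sum_plan_matrix_Nonneg del: plan_matrix.simps)
  moreover have "(\<forall>r\<in>range (case_prod Root). row r) \<longleftrightarrow> (\<forall>k. \<forall>pos. row (Root pos k))"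
    by auto
  moreover have "row (Root pos k) \<longleftrightarrow> signed pos (\<Sum>a\<in>UNIV. x (0, [], [], k, a)) \<le> signed pos (p k)" for pos k
    by (simp add: row_def sum_plan_matrix_Root[OF T] del: plan_matrix.simps)
  moreover have "(\<forall>r\<in>case_prod Extend ` (UNIV \<times> cons_index T). row r) \<longleftrightarrow>
      (\<forall>(k, h, h', a, b)\<in>cons_index T.
         (\<Sum>a'\<in>UNIV. x (Suc (length h), h @ [a], h' @ [b], k, a')) = x (length h, h, h', k, a))"
  proof -
    have ext: "(\<forall>pos. row (Extend pos (k, h, h', a, b))) \<longleftrightarrow>
        (\<Sum>a'\<in>UNIV. x (Suc (length h), h @ [a], h' @ [b], k, a')) - x (length h, h, h', k, a) = 0"
      if "(k, h, h', a, b) \<in> cons_index T" for k h h' a b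
      using that by (simp add: row_def sum_plan_matrix_Extend all_signed_nonpos_iff del: plan_matrix.simps)
    have "(\<forall>r\<in>case_prod Extend ` (UNIV \<times> cons_index T). row r) \<longleftrightarrow>
        (\<forall>c\<in>cons_index T. \<forall>pos. row (Extend pos c))"
      by auto
    also have "\<dots> \<longleftrightarrow> (\<forall>(k, h, h', a, b)\<in>cons_index T.
        (\<Sum>a'\<in>UNIV. x (Suc (length h), h @ [a], h' @ [b], k, a')) = x (length h, h, h', k, a))"
    proof (intro ball_cong refl)
      fix c :: "'k \<times> 'a list \<times> 'b list \<times> 'a \<times> 'b"
      assume "c \<in> cons_index T"
      moreover obtain k h h' a b where "c = (k, h, h', a, b)" by (cases c)
      ultimately show "(\<forall>pos. row (Extend pos c)) \<longleftrightarrow> (case c of (k, h, h', a, b) \<Rightarrow>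
          (\<Sum>a'\<in>UNIV. x (Suc (length h), h @ [a], h' @ [b], k, a')) = x (length h, h, h', k, a))"
        using ext by simp
    qed
    finally show ?thesis .
  qed
  ultimately show ?thesis
    unfolding in_polyhedron_def plan_rows_def ball_Un row_def[symmetric]
    by (simp add: all_signed_le_iff)
qed

lemma in_X_iff:
  "in_X T p x \<longleftrightarrow>
    (\<forall>c\<in>plan_index T. 0 \<le> plan_vec x c) \<and> (\<forall>k. (\<Sum>a\<in>UNIV. x k [] [] a) = p k) \<and>
    (\<forall>(k, h, h', a, b)\<in>cons_index T. (\<Sum>a'\<in>UNIV. x k (h @ [a]) (h' @ [b]) a') = x k h h' a)"
  by (auto simp: in_X_def plan_vec_def plan_index_def cons_index_def is_hist_def)

lemma plan_polyhedron_iff_in_X: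
  fixes x :: "nat \<times> 'a::finite list \<times> 'b::finite list \<times> 'k::finite \<times> 'a \<Rightarrow> real"
  assumes "0 < T"
  shows "plan_polyhedron T p x \<longleftrightarrow> in_X T p (vec_plan x)"
proof -
  have "plan_vec (vec_plan x) c = x c" if "c \<in> plan_index T" for c
    using that by (auto simp: plan_vec_def vec_plan_def plan_index_def)
  then show ?thesis
    unfolding plan_polyhedron_iff[OF assms] in_X_iff by (simp add: vec_plan_def)
qed

lemma sum_UNIV_prod: "(\<Sum>z\<in>UNIV. G z) = (\<Sum>l\<in>UNIV. \<Sum>b\<in>UNIV. G (l,b))"
  using sum.cartesian_product'[of G "UNIV" "UNIV"] by simp

lemma sum_plan_index:
  "(\<Sum>i\<in>plan_index T. F i) = (\<Sum>s<T. \<Sum>h\<in>{h::'a::finite list. length h = s}. \<Sum>h'\<in>{h'::'b::finite list. length h' = s}.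
      \<Sum>k\<in>(UNIV::'k::finite set). \<Sum>a\<in>(UNIV::'a set). F (s,h,h',k,a))"
proof -
  have "(\<Sum>i\<in>plan_index T. F i) = (\<Sum>s<T. \<Sum>y\<in>{h::'a list. length h = s} \<times> {h'::'b list. length h' = s} \<times> (UNIV::'k set) \<times> (UNIV::'a set). F (s,y))"
    unfolding plan_index_def using sum.Sigma[of "{..<T}" "\<lambda>s. {h::'a list. length h = s} \<times> {h'::'b list. length h' = s} \<times> (UNIV::'k set) \<times> (UNIV::'a set)" "\<lambda>s y. F (s,y)"]
    by simp
  also have "\<dots> = (\<Sum>s<T. \<Sum>h\<in>{h::'a::finite list. length h = s}. \<Sum>h'\<in>{h'::'b::finite list. length h' = s}.
      \<Sum>k\<in>(UNIV::'k::finite set). \<Sum>a\<in>(UNIV::'a set). F (s,h,h',k,a))"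
    by (simp add: sum.cartesian_product' sum_UNIV_prod)
  finally show ?thesis .
qed

lemma sum_reorder5:
  "(\<Sum>l\<in>L. \<Sum>s\<in>S. \<Sum>h\<in>H s. \<Sum>h'\<in>H' s. \<Sum>a\<in>A. F l s h h' a) =
   (\<Sum>s\<in>S. \<Sum>h\<in>H s. \<Sum>h'\<in>H' s. \<Sum>a\<in>A. \<Sum>l\<in>L. (F l s h h' a :: real))"
proof -
  have "(\<Sum>l\<in>L. \<Sum>s\<in>S. \<Sum>h\<in>H s. \<Sum>h'\<in>H' s. \<Sum>a\<in>A. F l s h h' a) =
    (\<Sum>s\<in>S. \<Sum>l\<in>L. \<Sum>h\<in>H s. \<Sum>h'\<in>H' s. \<Sum>a\<in>A. F l s h h' a)" by (rule sum.swap)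
  also have "\<dots> = (\<Sum>s\<in>S. \<Sum>h\<in>H s. \<Sum>l\<in>L. \<Sum>h'\<in>H' s. \<Sum>a\<in>A. F l s h h' a)"
    by (rule sum.cong[OF refl], rule sum.swap)
  also have "\<dots> = (\<Sum>s\<in>S. \<Sum>h\<in>H s. \<Sum>h'\<in>H' s. \<Sum>l\<in>L. \<Sum>a\<in>A. F l s h h' a)"
    by (rule sum.cong[OF refl], rule sum.cong[OF refl], rule sum.swap)
  also have "\<dots> = (\<Sum>s\<in>S. \<Sum>h\<in>H s. \<Sum>h'\<in>H' s. \<Sum>a\<in>A. \<Sum>l\<in>L. F l s h h' a)"
    by (rule sum.cong[OF refl], rule sum.cong[OF refl], rule sum.cong[OF refl], rule sum.swap)
  finally show ?thesis .
qed

lemma sum_reorder4: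
  "(\<Sum>k\<in>K. \<Sum>s\<in>S. \<Sum>h\<in>H s. \<Sum>h'\<in>H' s. F k s h h') =
   (\<Sum>s\<in>S. \<Sum>h\<in>H s. \<Sum>h'\<in>H' s. \<Sum>k\<in>K. (F k s h h' :: real))"
proof -
  have "(\<Sum>k\<in>K. \<Sum>s\<in>S. \<Sum>h\<in>H s. \<Sum>h'\<in>H' s. F k s h h') =
    (\<Sum>s\<in>S. \<Sum>k\<in>K. \<Sum>h\<in>H s. \<Sum>h'\<in>H' s. F k s h h')" by (rule sum.swap)
  also have "\<dots> = (\<Sum>s\<in>S. \<Sum>h\<in>H s. \<Sum>k\<in>K. \<Sum>h'\<in>H' s. F k s h h')"
    by (rule sum.cong[OF refl], rule sum.swap)
  also have "\<dots> = (\<Sum>s\<in>S. \<Sum>h\<in>H s. \<Sum>h'\<in>H' s. \<Sum>k\<in>K. F k s h h')"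
    by (rule sum.cong[OF refl], rule sum.cong[OF refl], rule sum.swap)
  finally show ?thesis .
qed

text \<open>Player 2's plan is indexed like player 1's plan in the game with roles exchanged, by
  \<open>(s, h\<^sup>B, h\<^sup>A, l, b)\<close>.\<close>

definition payoff_matrix :: "real \<Rightarrow> ('k \<Rightarrow> 'l \<Rightarrow> 'a \<Rightarrow> 'b \<Rightarrow> real) \<Rightarrow>
   nat \<times> 'a list \<times> 'b list \<times> 'k \<times> 'a \<Rightarrow> nat \<times> 'b list \<times> 'a list \<times> 'l \<times> 'b \<Rightarrow> real" where
  "payoff_matrix lam M i j = (case i of (s,h,h',k,a) \<Rightarrow> case j of (t,g',g,l,b) \<Rightarrow>
     if t = s \<and> g = h \<and> g' = h' then lam * (1 - lam) ^ s * M k l a b else 0)"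

lemma sum_payoff_matrix_row:
  fixes y :: "nat \<times> 'b::finite list \<times> 'a::finite list \<times> 'l::finite \<times> 'b \<Rightarrow> real"
  assumes "s < T" "length h = s" "length h' = s"
  shows "(\<Sum>j\<in>plan_index T. payoff_matrix lam M (s,h,h',k,a) j * y j) =
     (\<Sum>l\<in>UNIV. \<Sum>b\<in>UNIV. lam * (1 - lam) ^ s * M k l a b * y (s,h',h,l,b))"
proof -
  define f :: "'l \<times> 'b \<Rightarrow> _" where "f = (\<lambda>(l,b). (s,h',h,l,b))"
  have "(\<Sum>j\<in>plan_index T. payoff_matrix lam M (s,h,h',k,a) j * y j) = (\<Sum>j\<in>plan_index T. if j \<in> range f then payoff_matrix lam M (s,h,h',k,a) j * y j else 0)"
    by (rule sum.cong) (auto simp: payoff_matrix_def f_def split: prod.splits)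
  also have "\<dots> = (\<Sum>z\<in>UNIV. payoff_matrix lam M (s,h,h',k,a) (f z) * y (f z))"
    by (rule sum_range_if) (use assms in \<open>auto simp: f_def inj_on_def plan_index_def\<close>)
  also have "\<dots> = (\<Sum>l\<in>UNIV. \<Sum>b\<in>UNIV. lam * (1 - lam) ^ s * M k l a b * y (s,h',h,l,b))"
    by (subst sum_UNIV_prod) (simp add: f_def payoff_matrix_def)
  finally show ?thesis .
qed

lemma bilinear_eq_payoff:
  fixes \<sigma> :: "('k::finite,'a::finite,'b::finite) strat1" and \<tau> :: "('l::finite,'a,'b) strat2"
    and x :: "nat \<times> 'a list \<times> 'b list \<times> 'k \<times> 'a \<Rightarrow> real"
    and y :: "nat \<times> 'b list \<times> 'a list \<times> 'l \<times> 'b \<Rightarrow> real"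
  assumes s: "is_strat1 T \<sigma>" and t: "is_strat2 T \<tau>"
    and xd: "\<And>s h h' k a. s < T \<Longrightarrow> length h = s \<Longrightarrow> length h' = s \<Longrightarrow> x (s,h,h',k,a) = real_plan1 p \<sigma> k h h' a"
    and yd: "\<And>s h h' l b. s < T \<Longrightarrow> length h = s \<Longrightarrow> length h' = s \<Longrightarrow> y (s,h',h,l,b) = real_plan2 q \<tau> l h h' b"
  shows "bilinear (plan_index T) (plan_index T) (payoff_matrix lam M) x y = payoff M lam T p q \<sigma> \<tau>"
proof -
  define Tm where "Tm s h h' k a l b = lam * (1 - lam) ^ s * p k * q l * M k l a b * cond_plan1 \<sigma> k h h' a * cond_plan2 \<tau> l h h' b"
    for s h h' k a l b
  have "bilinear (plan_index T) (plan_index T) (payoff_matrix lam M) x y = (\<Sum>s<T. \<Sum>h\<in>{h::'a list. length h = s}. \<Sum>h'\<in>{h'::'b list. length h' = s}.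
      \<Sum>k\<in>UNIV. \<Sum>a\<in>UNIV. x (s,h,h',k,a) * (\<Sum>j\<in>plan_index T. payoff_matrix lam M (s,h,h',k,a) j * y j))"
    unfolding bilinear_eq_sum_left by (rule sum_plan_index)
  also have "\<dots> = (\<Sum>s<T. \<Sum>h\<in>{h::'a list. length h = s}. \<Sum>h'\<in>{h'::'b list. length h' = s}.
      \<Sum>k\<in>UNIV. \<Sum>a\<in>UNIV. \<Sum>l\<in>UNIV. \<Sum>b\<in>UNIV. Tm s h h' k a l b)"
  proof (intro sum.cong refl)
    fix s h h' k a assume "s \<in> {..<T}" "h \<in> {h::'a list. length h = s}" "h' \<in> {h'::'b list. length h' = s}"
    then have ss: "s < T" "length h = s" "length h' = s" by auto
    show "x (s,h,h',k,a) * (\<Sum>j\<in>plan_index T. payoff_matrix lam M (s,h,h',k,a) j * y j) = (\<Sum>l\<in>UNIV. \<Sum>b\<in>UNIV. Tm s h h' k a l b)"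
      unfolding sum_payoff_matrix_row[OF ss] using ss
      by (simp add: xd yd sum_distrib_left Tm_def real_plan1_def real_plan2_def cond_plan1_def cond_plan2_def mult_ac)
  qed
  also have "\<dots> = (\<Sum>k\<in>UNIV. \<Sum>s<T. \<Sum>h\<in>{h::'a list. length h = s}. \<Sum>h'\<in>{h'::'b list. length h' = s}.
      \<Sum>a\<in>UNIV. \<Sum>l\<in>UNIV. \<Sum>b\<in>UNIV. Tm s h h' k a l b)"
    by (rule sum_reorder4[symmetric])
  also have "\<dots> = (\<Sum>k\<in>UNIV. \<Sum>l\<in>UNIV. \<Sum>s<T. \<Sum>h\<in>{h::'a list. length h = s}. \<Sum>h'\<in>{h'::'b list. length h' = s}.
      \<Sum>a\<in>UNIV. \<Sum>b\<in>UNIV. Tm s h h' k a l b)"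
    by (rule sum.cong[OF refl], rule sum_reorder5[symmetric])
  also have "\<dots> = payoff M lam T p q \<sigma> \<tau>"
    unfolding payoff_def
  proof (intro sum.cong refl)
    fix k l
    show "(\<Sum>s<T. \<Sum>h\<in>{h::'a list. length h = s}. \<Sum>h'\<in>{h'::'b list. length h' = s}.
      \<Sum>a\<in>UNIV. \<Sum>b\<in>UNIV. Tm s h h' k a l b) = p k * q l * cond_payoff M lam T \<sigma> \<tau> k l"
      unfolding cond_payoff_sequence_form[OF s t] by (simp add: sum_distrib_left Tm_def mult_ac)
  qed
  finally show ?thesis .
qed


lemma bilinear_eq_payoff_strat_of_plan1:
  fixes x :: "nat \<times> 'a::finite list \<times> 'b::finite list \<times> 'k::finite \<times> 'a \<Rightarrow> real"
    and \<tau> :: "('l::finite,'a,'b) strat2"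
  assumes T: "0 < T" and x: "plan_polyhedron T p x" and t: "is_strat2 T \<tau>"
  shows "bilinear (plan_index T) (plan_index T) (payoff_matrix lam M) x (plan_vec (swap_roles (real_plan2 q \<tau>)))
           = payoff M lam T p q (strat_of_plan1 (vec_plan x)) \<tau>"
proof (rule bilinear_eq_payoff[OF _ t])
  have X: "in_X T p (vec_plan x)" using plan_polyhedron_iff_in_X[OF T] x by blast
  then show "is_strat1 T (strat_of_plan1 (vec_plan x))" by (rule is_strat1_strat_of_plan1)
  fix s and h :: "'a list" and h' :: "'b list" and k a
  assume "s < T" "length h = s" "length h' = s"
  then show "x (s, h, h', k, a) = real_plan1 p (strat_of_plan1 (vec_plan x)) k h h' a"
    using real_plan1_strat_of_plan1[OF X] by (simp add: vec_plan_def is_hist_def)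
qed (simp add: plan_vec_def)

lemma bilinear_eq_payoff_strat_of_plan2:
  fixes y :: "nat \<times> 'b::finite list \<times> 'a::finite list \<times> 'l::finite \<times> 'b \<Rightarrow> real"
    and \<sigma> :: "('k::finite,'a,'b) strat1"
  assumes T: "0 < T" and y: "plan_polyhedron T q y" and s: "is_strat1 T \<sigma>"
  shows "bilinear (plan_index T) (plan_index T) (payoff_matrix lam M) (plan_vec (real_plan1 p \<sigma>)) y
           = payoff M lam T p q \<sigma> (strat_of_plan2 (swap_roles (vec_plan y)))"
proof (rule bilinear_eq_payoff[OF s])
  have "in_X T q (vec_plan y)" using plan_polyhedron_iff_in_X[OF T] y by blast
  then have Y: "in_Y T q (swap_roles (vec_plan y))" by simp
  then show "is_strat2 T (strat_of_plan2 (swap_roles (vec_plan y)))" by (rule is_strat2_strat_of_plan2)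
  fix s and h :: "'a list" and h' :: "'b list" and l b
  assume "s < T" "length h = s" "length h' = s"
  then show "y (s, h', h, l, b) = real_plan2 q (strat_of_plan2 (swap_roles (vec_plan y))) l h h' b"
    using real_plan2_strat_of_plan2[OF Y] by (simp add: vec_plan_def is_hist_def)
qed (simp add: plan_vec_def)

lemma plan_polyhedron_real_plan1:
  fixes \<sigma> :: "('k::finite, 'a::finite, 'b::finite) strat1"
  assumes "0 < T" "\<forall>k. 0 \<le> p k" "is_strat1 T \<sigma>"
  shows "plan_polyhedron T p (plan_vec (real_plan1 p \<sigma>))"
  unfolding plan_polyhedron_iff_in_X[OF assms(1)] using in_X_real_plan1[OF assms(3,2,1)] by simp

lemma plan_polyhedron_real_plan2:
  fixes \<tau> :: "('l::finite, 'a::finite, 'b::finite) strat2"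
  assumes "0 < T" "\<forall>l. 0 \<le> q l" "is_strat2 T \<tau>"
  shows "plan_polyhedron T q (plan_vec (swap_roles (real_plan2 q \<tau>)))"
  unfolding plan_polyhedron_iff_in_X[OF assms(1)] using in_Y_real_plan2[OF assms(3,2,1)] by simp

lemma plan_polyhedron_abs_le:
  fixes x :: "nat \<times> 'a::finite list \<times> 'b::finite list \<times> 'k::finite \<times> 'a \<Rightarrow> real"
  assumes T: "0 < T" and p: "\<forall>k. 0 \<le> p k" and x: "plan_polyhedron T p x" and i: "i \<in> plan_index T"
  shows "\<bar>x i\<bar> \<le> (\<Sum>k\<in>UNIV. p k)"
proof -
  obtain s h h' k a where i_eq: "i = (s, h, h', k, a)" by (cases i)
  have h: "s = length h" "is_hist T h h'" using i unfolding i_eq plan_index_def is_hist_def by auto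
  have "0 \<le> vec_plan x k h h' a \<and> vec_plan x k h h' a \<le> p k"
    by (rule plan_bounds) (use x plan_polyhedron_iff_in_X[OF T] h p in auto)
  moreover have "p k \<le> (\<Sum>k\<in>UNIV. p k)" using p by (intro member_le_sum) auto
  ultimately show ?thesis using h unfolding i_eq vec_plan_def by simp
qed

lemma bilinear_plan_polyhedra_bounded:
  fixes M :: "'k::finite \<Rightarrow> 'l::finite \<Rightarrow> 'a::finite \<Rightarrow> 'b::finite \<Rightarrow> real" and lam :: real
  assumes T: "0 < T" and p: "\<forall>k. 0 \<le> p k" and q: "\<forall>l. 0 \<le> q l"
  defines "B \<equiv> (\<Sum>i\<in>plan_index T. \<Sum>j\<in>plan_index T. (\<Sum>k\<in>UNIV. p k) * \<bar>payoff_matrix lam M i j\<bar> * (\<Sum>l\<in>UNIV. q l))"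
  assumes x: "plan_polyhedron T p x" and y: "plan_polyhedron T q y"
  shows "\<bar>bilinear (plan_index T) (plan_index T) (payoff_matrix lam M) x y\<bar> \<le> B"
proof -
  let ?C = "payoff_matrix lam M"
  have "\<bar>bilinear (plan_index T) (plan_index T) ?C x y\<bar> \<le>
      (\<Sum>i\<in>plan_index T. \<Sum>j\<in>plan_index T. \<bar>x i\<bar> * \<bar>?C i j\<bar> * \<bar>y j\<bar>)"
    unfolding bilinear_def by (rule order_trans[OF sum_abs sum_mono[OF sum_abs[THEN order_trans]]]) (simp add: abs_mult)
  also have "\<dots> \<le> B" unfolding B_def
    using plan_polyhedron_abs_le[OF T p x] plan_polyhedron_abs_le[OF T q y] sum_nonneg[of UNIV p] p
    by (intro sum_mono mult_mono) auto
  finally show ?thesis .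
qed

theorem is_value_exists:
  fixes M :: "'k::finite \<Rightarrow> 'l::finite \<Rightarrow> 'a::finite \<Rightarrow> 'b::finite \<Rightarrow> real"
  assumes T: "0 < T" and p: "\<forall>k. 0 \<le> p k" and q: "\<forall>l. 0 \<le> q l"
  shows "\<exists>v. is_value M lam T p q v"
proof -
  let ?I = "plan_index T :: (nat \<times> 'a list \<times> 'b list \<times> 'k \<times> 'a) set"
  let ?J = "plan_index T :: (nat \<times> 'b list \<times> 'a list \<times> 'l \<times> 'b) set"
  let ?C = "payoff_matrix lam M"
  obtain x y v where x: "plan_polyhedron T p x" and y: "plan_polyhedron T q y"
    and min_x: "\<forall>y'. plan_polyhedron T q y' \<longrightarrow> v \<le> bilinear ?I ?J ?C x y'"
    and max_y: "\<forall>x'. plan_polyhedron T p x' \<longrightarrow> bilinear ?I ?J ?C x' y \<le> v"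
    using minimax_polyhedra[OF finite_plan_index finite_plan_index finite_plan_rows finite_plan_rows
        plan_polyhedron_real_plan1[OF T p is_strat1_uniform1] plan_polyhedron_real_plan2[OF T q is_strat2_uniform2]
        bilinear_plan_polyhedra_bounded[OF T p q]]
    by blast
  have "v \<le> payoff M lam T p q (strat_of_plan1 (vec_plan x)) \<tau>" if t: "is_strat2 T \<tau>" for \<tau>
  proof -
    have "v \<le> bilinear ?I ?J ?C x (plan_vec (swap_roles (real_plan2 q \<tau>)))"
      using min_x plan_polyhedron_real_plan2[OF T q t] by blast
    then show ?thesis unfolding bilinear_eq_payoff_strat_of_plan1[OF T x t] .
  qed
  moreover have "payoff M lam T p q \<sigma> (strat_of_plan2 (swap_roles (vec_plan y))) \<le> v" if s: "is_strat1 T \<sigma>" for \<sigma>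
  proof -
    have "bilinear ?I ?J ?C (plan_vec (real_plan1 p \<sigma>)) y \<le> v"
      using max_y plan_polyhedron_real_plan1[OF T p s] by blast
    then show ?thesis unfolding bilinear_eq_payoff_strat_of_plan2[OF T y s] .
  qed
  moreover have "is_strat1 T (strat_of_plan1 (vec_plan x))"
    using plan_polyhedron_iff_in_X[OF T] x is_strat1_strat_of_plan1 by blast
  moreover have "in_X T q (vec_plan y)"
    using plan_polyhedron_iff_in_X[OF T] y by blast
  then have "is_strat2 T (strat_of_plan2 (swap_roles (vec_plan y)))"
    by (intro is_strat2_strat_of_plan2[of T q]) simp
  ultimately show ?thesis unfolding is_value_def by blast
qed

lemma is_value_unique:
  assumes "is_value M lam T p q v1" "is_value M lam T p q v2"
  shows "v1 = v2"
proof -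
  obtain \<sigma>1 \<tau>1 where 1: "is_strat1 T \<sigma>1" "\<forall>\<tau>. is_strat2 T \<tau> \<longrightarrow> payoff M lam T p q \<sigma>1 \<tau> \<ge> v1"
    "is_strat2 T \<tau>1" "\<forall>\<sigma>. is_strat1 T \<sigma> \<longrightarrow> payoff M lam T p q \<sigma> \<tau>1 \<le> v1"
    using assms(1) unfolding is_value_def by blast
  obtain \<sigma>2 \<tau>2 where 2: "is_strat1 T \<sigma>2" "\<forall>\<tau>. is_strat2 T \<tau> \<longrightarrow> payoff M lam T p q \<sigma>2 \<tau> \<ge> v2"
    "is_strat2 T \<tau>2" "\<forall>\<sigma>. is_strat1 T \<sigma> \<longrightarrow> payoff M lam T p q \<sigma> \<tau>2 \<le> v2"
    using assms(2) unfolding is_value_def by blast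
  have "v1 \<le> v2" using 1(2) 2(4) 1(1) 2(3) by (meson order.trans)
  moreover have "v2 \<le> v1" using 2(2) 1(4) 2(1) 1(3) by (meson order.trans)
  ultimately show ?thesis by simp
qed

lemma game_value_eqI:
  assumes "is_value M lam T p q v"
  shows "game_value M lam T p q = v"
  unfolding game_value_def using assms is_value_unique by blast

lemma is_value_game_value:
  fixes M :: "'k::finite \<Rightarrow> 'l::finite \<Rightarrow> 'a::finite \<Rightarrow> 'b::finite \<Rightarrow> real"
  assumes "0 < T" "\<forall>k. 0 \<le> p k" "\<forall>l. 0 \<le> q l"
  shows "is_value M lam T p q (game_value M lam T p q)"
  using is_value_exists[OF assms, of M lam] game_value_eqI by metis

section \<open>The linear programs\<close>

lemma payoff_eq_sum_over_type2:
  "payoff M lam T p q \<sigma> \<tau> = (\<Sum>l\<in>UNIV. q l * (\<Sum>k\<in>UNIV. p k * cond_payoff M lam T \<sigma> \<tau> k l))"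
  unfolding payoff_def by (subst sum.swap) (simp add: sum_distrib_left mult_ac)

lemma payoff_eq_if_same_plan1:
  fixes \<sigma>1 \<sigma>2 :: "('k::finite,'a::finite,'b::finite) strat1" and \<tau> :: "('l::finite,'a,'b) strat2"
  assumes s1: "is_strat1 T \<sigma>1" and s2: "is_strat1 T \<sigma>2" and t: "is_strat2 T \<tau>"
    and eq: "\<And>k h h' a. is_hist T h h' \<Longrightarrow> real_plan1 p \<sigma>1 k h h' a = real_plan1 p \<sigma>2 k h h' a"
  shows "payoff M lam T p q \<sigma>1 \<tau> = payoff M lam T p q \<sigma>2 \<tau>"
proof -
  define x where "x = (\<lambda>(s::nat, h::'a list, h'::'b list, k::'k, a::'a). real_plan1 p \<sigma>1 k h h' a)"
  define y where "y = (\<lambda>(s::nat, g'::'b list, g::'a list, l::'l, b::'b). real_plan2 q \<tau> l g g' b)"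
  have "bilinear (plan_index T) (plan_index T) (payoff_matrix lam M) x y = payoff M lam T p q \<sigma>1 \<tau>"
    by (rule bilinear_eq_payoff[OF s1 t]) (simp_all add: x_def y_def)
  moreover have "bilinear (plan_index T) (plan_index T) (payoff_matrix lam M) x y = payoff M lam T p q \<sigma>2 \<tau>"
    by (rule bilinear_eq_payoff[OF s2 t]) (simp_all add: x_def y_def eq is_hist_def)
  ultimately show ?thesis by simp
qed

lemma weighted_sum_le_imp_eq:
  fixes a b q :: "'l::finite \<Rightarrow> real"
  assumes "\<forall>l. q l > 0" "\<And>l. b l \<le> a l" "(\<Sum>l\<in>UNIV. q l * a l) \<le> (\<Sum>l\<in>UNIV. q l * b l)"
  shows "a l = b l"
proof -
  have "(\<Sum>l\<in>UNIV. q l * (a l - b l)) \<le> 0" using assms(3) by (simp add: algebra_simps sum_subtractf)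
  moreover have nn: "\<forall>l\<in>UNIV. 0 \<le> q l * (a l - b l)" using assms(1,2) by (simp add: less_imp_le)
  ultimately have "(\<Sum>l\<in>UNIV. q l * (a l - b l)) = 0" by (simp add: antisym sum_nonneg)
  then have "q l * (a l - b l) = 0" using nn by (simp add: sum_nonneg_eq_0_iff)
  then show ?thesis using assms(1) by (metis eq_iff_diff_eq_0 mult_eq_0_iff order_less_irrefl)
qed

lemma discounted_telescope_le:
  fixes E Z \<Phi> :: "nat \<Rightarrow> real"
  assumes T: "0 < T" and lam: "0 \<le> 1 - lam"
    and phi: "\<And>s. s < T \<Longrightarrow> \<Phi> s = lam * E s + (1 - lam) * Z s"
    and zT: "Z (T - 1) = 0"
    and zs: "\<And>s. Suc s < T \<Longrightarrow> Z s \<le> \<Phi> (Suc s)"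
  shows "\<Phi> 0 \<le> (\<Sum>t<T. lam * (1 - lam) ^ t * E t)"
proof -
  define \<Psi> where "\<Psi> s = (\<Sum>t<T - s. lam * (1 - lam) ^ t * E (s + t))" for s
  have "\<Phi> n \<le> \<Psi> n" if "n \<le> T - 1" for n
    using that
  proof (induction n rule: inc_induct)
    case base
    have "\<Psi> (T - 1) = lam * E (T - 1)" unfolding \<Psi>_def using T by simp
    then show ?case using phi[of "T - 1"] zT T by simp
  next
    case (step n)
    have "Z n \<le> \<Phi> (Suc n)" using zs step.hyps by simp
    with step.IH have "Z n \<le> \<Psi> (Suc n)" by linarith
    moreover have "\<Phi> n = lam * E n + (1 - lam) * Z n" using phi step.hyps by simp
    moreover have "\<Psi> n = lam * E n + (1 - lam) * \<Psi> (Suc n)"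
    proof -
      have tn: "T - n = Suc (T - Suc n)" using step.hyps by simp
      have "\<Psi> n = lam * (1 - lam) ^ 0 * E (n + 0) + (\<Sum>t<T - Suc n. lam * (1 - lam) ^ Suc t * E (n + Suc t))"
        unfolding \<Psi>_def tn sum.lessThan_Suc_shift by simp
      also have "(\<Sum>t<T - Suc n. lam * (1 - lam) ^ Suc t * E (n + Suc t)) = (1 - lam) * \<Psi> (Suc n)"
        unfolding \<Psi>_def by (simp add: sum_distrib_left mult_ac)
      finally show ?thesis by simp
    qed
    ultimately show ?case using lam by (simp add: mult_left_mono)
  qed
  from this[of 0] show ?thesis unfolding \<Psi>_def by simp
qed

lemma discounted_telescope_ge:
  fixes E Z \<Phi> :: "nat \<Rightarrow> real"
  assumes T: "0 < T" and lam: "0 \<le> 1 - lam"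
    and phi: "\<And>s. s < T \<Longrightarrow> \<Phi> s = lam * E s + (1 - lam) * Z s"
    and zT: "Z (T - 1) = 0"
    and zs: "\<And>s. Suc s < T \<Longrightarrow> Z s \<ge> \<Phi> (Suc s)"
  shows "\<Phi> 0 \<ge> (\<Sum>t<T. lam * (1 - lam) ^ t * E t)"
proof -
  have "(\<lambda>s. - \<Phi> s) 0 \<le> (\<Sum>t<T. lam * (1 - lam) ^ t * (\<lambda>s. - E s) t)"
  proof (rule discounted_telescope_le[where Z="\<lambda>s. - Z s"])
    show "0 < T" by (rule T)
    show "0 \<le> 1 - lam" by (rule lam)
    show "- \<Phi> s = lam * - E s + (1 - lam) * - Z s" if "s < T" for s using phi[OF that] by simp
    show "- Z (T - 1) = 0" using zT by simp
    show "- Z s \<le> - \<Phi> (Suc s)" if "Suc s < T" for s using zs[OF that] by simp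
  qed
  then show ?thesis by (simp add: sum_negf)
qed

definition lp1_lhs :: "('k \<Rightarrow> 'l \<Rightarrow> 'a \<Rightarrow> 'b \<Rightarrow> real) \<Rightarrow> real \<Rightarrow> ('k,'a,'b) strat1 \<Rightarrow>
   ('l \<Rightarrow> 'a list \<Rightarrow> 'b list \<Rightarrow> 'a \<Rightarrow> 'b \<Rightarrow> real) \<Rightarrow> 'l \<Rightarrow> 'a list \<Rightarrow> 'b list \<Rightarrow> 'b \<Rightarrow> real" where
  "lp1_lhs M lam x U l h h' b' = lam * (\<Sum>k\<in>UNIV. \<Sum>a'\<in>UNIV. M k l a' b' * x k h h' a') + (1 - lam) * (\<Sum>a'\<in>UNIV. U l h h' a' b')"

definition stage_payoff ::
  "('k \<Rightarrow> 'l \<Rightarrow> 'a \<Rightarrow> 'b \<Rightarrow> real) \<Rightarrow> ('k, 'a, 'b) strat1 \<Rightarrow> 'l \<Rightarrow> ('a list \<Rightarrow> 'b list \<Rightarrow> 'b \<Rightarrow> real) \<Rightarrow> nat \<Rightarrow> real" where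
  "stage_payoff M x l y s = (\<Sum>h\<in>{h. length h = s}. \<Sum>h'\<in>{h'. length h' = s}. \<Sum>b'\<in>UNIV.
      y h h' b' * (\<Sum>k\<in>UNIV. \<Sum>a'\<in>UNIV. M k l a' b' * x k h h' a'))"

definition continuation ::
  "('l \<Rightarrow> 'a list \<Rightarrow> 'b list \<Rightarrow> 'a \<Rightarrow> 'b \<Rightarrow> real) \<Rightarrow> 'l \<Rightarrow> ('a list \<Rightarrow> 'b list \<Rightarrow> 'b \<Rightarrow> real) \<Rightarrow> nat \<Rightarrow> real" where
  "continuation U l y s = (\<Sum>h\<in>{h. length h = s}. \<Sum>h'\<in>{h'. length h' = s}. \<Sum>b'\<in>UNIV. y h h' b' * (\<Sum>a'\<in>UNIV. U l h h' a' b'))"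

definition lp1_lhs_expected ::
  "('k \<Rightarrow> 'l \<Rightarrow> 'a \<Rightarrow> 'b \<Rightarrow> real) \<Rightarrow> real \<Rightarrow> ('k, 'a, 'b) strat1 \<Rightarrow> ('l \<Rightarrow> 'a list \<Rightarrow> 'b list \<Rightarrow> 'a \<Rightarrow> 'b \<Rightarrow> real) \<Rightarrow>
   'l \<Rightarrow> ('a list \<Rightarrow> 'b list \<Rightarrow> 'b \<Rightarrow> real) \<Rightarrow> nat \<Rightarrow> real" where
  "lp1_lhs_expected M lam x U l y s = (\<Sum>h\<in>{h. length h = s}. \<Sum>h'\<in>{h'. length h' = s}. \<Sum>b'\<in>UNIV. y h h' b' * lp1_lhs M lam x U l h h' b')"

lemma lp1_lhs_expected_split: "lp1_lhs_expected M lam x U l y s = lam * stage_payoff M x l y s + (1 - lam) * continuation U l y s"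
  unfolding lp1_lhs_expected_def stage_payoff_def continuation_def lp1_lhs_def
  by (simp add: sum_distrib_left sum.distrib algebra_simps)

lemma lp1_lhs_expected_Suc_minus_continuation:
  fixes M :: "'k::finite \<Rightarrow> 'l \<Rightarrow> 'a::finite \<Rightarrow> 'b::finite \<Rightarrow> real"
  shows "lp1_lhs_expected M lam x U l y (Suc s) - continuation U l y s = (\<Sum>h\<in>{h. length h = s}. \<Sum>a\<in>UNIV. \<Sum>h'\<in>{h'. length h' = s}. \<Sum>b\<in>UNIV.
     (\<Sum>b'\<in>UNIV. y (h @ [a]) (h' @ [b]) b' * lp1_lhs M lam x U l (h @ [a]) (h' @ [b]) b') - y h h' b * U l h h' a b)"
proof -
  have z: "continuation U l y s = (\<Sum>h\<in>{h. length h = s}. \<Sum>a\<in>UNIV. \<Sum>h'\<in>{h'. length h' = s}. \<Sum>b\<in>UNIV. y h h' b * U l h h' a b)"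
  proof -
    have "continuation U l y s = (\<Sum>h\<in>{h. length h = s}. \<Sum>h'\<in>{h'. length h' = s}. \<Sum>b\<in>UNIV. \<Sum>a\<in>UNIV. y h h' b * U l h h' a b)"
      unfolding continuation_def by (simp add: sum_distrib_left)
    also have "\<dots> = (\<Sum>h\<in>{h. length h = s}. \<Sum>h'\<in>{h'. length h' = s}. \<Sum>a\<in>UNIV. \<Sum>b\<in>UNIV. y h h' b * U l h h' a b)"
      by (rule sum.cong[OF refl], rule sum.cong[OF refl], rule sum.swap)
    also have "\<dots> = (\<Sum>h\<in>{h. length h = s}. \<Sum>a\<in>UNIV. \<Sum>h'\<in>{h'. length h' = s}. \<Sum>b\<in>UNIV. y h h' b * U l h h' a b)"
      by (rule sum.cong[OF refl], rule sum.swap)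
    finally show ?thesis .
  qed
  have p: "lp1_lhs_expected M lam x U l y (Suc s) = (\<Sum>h\<in>{h. length h = s}. \<Sum>a\<in>UNIV. \<Sum>h'\<in>{h'. length h' = s}. \<Sum>b\<in>UNIV.
     (\<Sum>b'\<in>UNIV. y (h @ [a]) (h' @ [b]) b' * lp1_lhs M lam x U l (h @ [a]) (h' @ [b]) b'))"
    by (simp only: lp1_lhs_expected_def sum_lists_length_Suc)
  show ?thesis unfolding z p by (simp add: sum_subtractf)
qed

lemma continuation_last:
  fixes y :: "'a list \<Rightarrow> 'b list \<Rightarrow> 'b \<Rightarrow> real"
  assumes "\<And>h h' a b. length h = T - 1 \<Longrightarrow> length h' = T - 1 \<Longrightarrow> U l h h' a b = 0"
  shows "continuation U l y (T - 1) = 0"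
  unfolding continuation_def using assms by simp

lemma lp1_lhs_expected_0: "lp1_lhs_expected M lam x U l y 0 = (\<Sum>b'\<in>UNIV. y [] [] b' * lp1_lhs M lam x U l [] [] b')"
  unfolding lp1_lhs_expected_def by simp

text \<open>Weak duality for a fixed pure type \<open>l\<close> of player 2: the LP constraints, averaged with the
  realization plan \<open>y\<close> of player 2, telescope to the discounted payoff.\<close>

lemma lp1_feasible_le_discounted:
  fixes M :: "'k::finite \<Rightarrow> 'l::finite \<Rightarrow> 'a::finite \<Rightarrow> 'b::finite \<Rightarrow> real"
    and y :: "'a list \<Rightarrow> 'b list \<Rightarrow> 'b \<Rightarrow> real"
  assumes F: "lp1_feasible M lam T p x u0 U" and T: "0 < T" and lam: "lam \<le> 1"
    and yn: "\<And>h h' b. is_hist T h h' \<Longrightarrow> 0 \<le> y h h' b"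
    and y0: "(\<Sum>b\<in>UNIV. y [] [] b) = 1"
    and yc: "\<And>h h' a b. is_hist (T - 1) h h' \<Longrightarrow> (\<Sum>b'\<in>UNIV. y (h @ [a]) (h' @ [b]) b') = y h h' b"
  shows "u0 l \<le> (\<Sum>t<T. lam * (1 - lam) ^ t * stage_payoff M x l y t)"
proof -
  have Ut: "\<And>h h' a b. length h = T - 1 \<Longrightarrow> length h' = T - 1 \<Longrightarrow> U l h h' a b = 0"
    using F unfolding lp1_feasible_def by blast
  have root: "\<And>b'. u0 l \<le> lp1_lhs M lam x U l [] [] b'"
    using F unfolding lp1_feasible_def lp1_lhs_def by blast
  have stp: "\<And>h h' a b b'. is_hist (T - 1) h h' \<Longrightarrow> U l h h' a b \<le> lp1_lhs M lam x U l (h @ [a]) (h' @ [b]) b'"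
    using F unfolding lp1_feasible_def lp1_lhs_def by blast
  have h00: "is_hist T ([]::'a list) ([]::'b list)" using T by (simp add: is_hist_def)
  have "u0 l = (\<Sum>b'\<in>UNIV. y [] [] b' * u0 l)" using y0 by (simp add: sum_distrib_right[symmetric])
  also have "\<dots> \<le> lp1_lhs_expected M lam x U l y 0" unfolding lp1_lhs_expected_0
    by (intro sum_mono mult_left_mono root yn[OF h00])
  also have "\<dots> \<le> (\<Sum>t<T. lam * (1 - lam) ^ t * stage_payoff M x l y t)"
  proof (rule discounted_telescope_le[where Z="continuation U l y"])
    show "0 < T" "0 \<le> 1 - lam" using T lam by auto
    show "lp1_lhs_expected M lam x U l y s = lam * stage_payoff M x l y s + (1 - lam) * continuation U l y s" for s by (rule lp1_lhs_expected_split)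
    show "continuation U l y (T - 1) = 0" by (rule continuation_last) (rule Ut)
  next
    fix s assume s: "Suc s < T"
    have "0 \<le> lp1_lhs_expected M lam x U l y (Suc s) - continuation U l y s"
      unfolding lp1_lhs_expected_Suc_minus_continuation
    proof (intro sum_nonneg)
      fix h :: "'a list" and a and h' :: "'b list" and b
      assume "h \<in> {h. length h = s}" "h' \<in> {h'. length h' = s}"
      then have hh: "is_hist (T - 1) h h'" and hT: "is_hist T (h @ [a]) (h' @ [b])"
        using s by (auto simp: is_hist_def)
      have "y h h' b * U l h h' a b = (\<Sum>b'\<in>UNIV. y (h @ [a]) (h' @ [b]) b' * U l h h' a b)"
        using yc[OF hh, of a b] by (simp add: sum_distrib_right[symmetric])
      also have "\<dots> \<le> (\<Sum>b'\<in>UNIV. y (h @ [a]) (h' @ [b]) b' * lp1_lhs M lam x U l (h @ [a]) (h' @ [b]) b')"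
        by (intro sum_mono mult_left_mono stp[OF hh] yn[OF hT])
      finally show "0 \<le> (\<Sum>b'\<in>UNIV. y (h @ [a]) (h' @ [b]) b' * lp1_lhs M lam x U l (h @ [a]) (h' @ [b]) b') - y h h' b * U l h h' a b"
        by simp
    qed
    then show "continuation U l y s \<le> lp1_lhs_expected M lam x U l y (Suc s)" by simp
  qed
  finally show ?thesis .
qed

lemma lp1_tight_eq_discounted:
  fixes M :: "'k::finite \<Rightarrow> 'l::finite \<Rightarrow> 'a::finite \<Rightarrow> 'b::finite \<Rightarrow> real"
    and y :: "'a list \<Rightarrow> 'b list \<Rightarrow> 'b \<Rightarrow> real"
  assumes T: "0 < T" and lam: "lam \<le> 1"
    and Ut: "\<And>h h' a b. length h = T - 1 \<Longrightarrow> length h' = T - 1 \<Longrightarrow> U l h h' a b = 0"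
    and root: "(\<Sum>b'\<in>UNIV. y [] [] b' * lp1_lhs M lam x U l [] [] b') = u0"
    and stp: "\<And>h h' a b. is_hist (T - 1) h h' \<Longrightarrow>
       (\<Sum>b'\<in>UNIV. y (h @ [a]) (h' @ [b]) b' * lp1_lhs M lam x U l (h @ [a]) (h' @ [b]) b') = y h h' b * U l h h' a b"
  shows "u0 = (\<Sum>t<T. lam * (1 - lam) ^ t * stage_payoff M x l y t)"
proof -
  have zs: "continuation U l y s = lp1_lhs_expected M lam x U l y (Suc s)" if s: "Suc s < T" for s
  proof -
    have "lp1_lhs_expected M lam x U l y (Suc s) - continuation U l y s = 0"
      unfolding lp1_lhs_expected_Suc_minus_continuation
    proof (intro sum.neutral ballI)
      fix h :: "'a list" and a and h' :: "'b list" and b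
      assume "h \<in> {h. length h = s}" "h' \<in> {h'. length h' = s}"
      then have hh: "is_hist (T - 1) h h'" using s by (auto simp: is_hist_def)
      show "(\<Sum>b'\<in>UNIV. y (h @ [a]) (h' @ [b]) b' * lp1_lhs M lam x U l (h @ [a]) (h' @ [b]) b') - y h h' b * U l h h' a b = 0"
        using stp[OF hh] by simp
    qed
    then show ?thesis by simp
  qed
  have phi: "lp1_lhs_expected M lam x U l y s = lam * stage_payoff M x l y s + (1 - lam) * continuation U l y s" for s by (rule lp1_lhs_expected_split)
  have zT: "continuation U l y (T - 1) = 0" by (rule continuation_last) (rule Ut)
  have "lp1_lhs_expected M lam x U l y 0 \<le> (\<Sum>t<T. lam * (1 - lam) ^ t * stage_payoff M x l y t)"
    by (rule discounted_telescope_le[where Z="continuation U l y"]) (use T lam phi zT zs in auto)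
  moreover have "lp1_lhs_expected M lam x U l y 0 \<ge> (\<Sum>t<T. lam * (1 - lam) ^ t * stage_payoff M x l y t)"
    by (rule discounted_telescope_ge[where Z="continuation U l y"]) (use T lam phi zT zs in auto)
  ultimately show ?thesis using root unfolding lp1_lhs_expected_0 by simp
qed

lemma sum_swap_inner3:
  "(\<Sum>k\<in>K. \<Sum>a\<in>A. \<Sum>b\<in>B. f k a b) = (\<Sum>b\<in>B. \<Sum>k\<in>K. \<Sum>a\<in>A. (f k a b :: real))"
  by (subst sum.swap) (simp add: sum.swap[of _ A])

lemma type_payoff_eq_discounted:
  fixes M :: "'k::finite \<Rightarrow> 'l::finite \<Rightarrow> 'a::finite \<Rightarrow> 'b::finite \<Rightarrow> real"
  assumes x: "in_X T p x" and t: "is_strat2 T \<tau>"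
  shows "(\<Sum>k\<in>UNIV. p k * cond_payoff M lam T (strat_of_plan1 x) \<tau> k l)
    = (\<Sum>s<T. lam * (1 - lam) ^ s * stage_payoff M x l (cond_plan2 \<tau> l) s)"
proof -
  have plan: "p k * cond_plan1 (strat_of_plan1 x) k h h' a = x k h h' a" if "is_hist T h h'" for k h h' a
    using real_plan1_strat_of_plan1[OF x that, of k a] by (simp add: real_plan1_def cond_plan1_def mult.assoc)
  have "(\<Sum>k\<in>UNIV. p k * cond_payoff M lam T (strat_of_plan1 x) \<tau> k l) =
    (\<Sum>k\<in>UNIV. \<Sum>s<T. \<Sum>h\<in>{h. length h = s}. \<Sum>h'\<in>{h'. length h' = s}. \<Sum>a\<in>UNIV. \<Sum>b\<in>UNIV.
       lam * (1 - lam) ^ s * M k l a b * (p k * cond_plan1 (strat_of_plan1 x) k h h' a) * cond_plan2 \<tau> l h h' b)"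
    unfolding cond_payoff_sequence_form[OF is_strat1_strat_of_plan1[OF x] t] sum_distrib_left
    by (simp add: mult_ac)
  also have "\<dots> = (\<Sum>k\<in>UNIV. \<Sum>s<T. \<Sum>h\<in>{h. length h = s}. \<Sum>h'\<in>{h'. length h' = s}. \<Sum>a\<in>UNIV. \<Sum>b\<in>UNIV.
       lam * (1 - lam) ^ s * M k l a b * x k h h' a * cond_plan2 \<tau> l h h' b)"
    by (intro sum.cong refl) (simp add: plan is_hist_def)
  also have "\<dots> = (\<Sum>s<T. \<Sum>h\<in>{h. length h = s}. \<Sum>h'\<in>{h'. length h' = s}. \<Sum>b\<in>UNIV. \<Sum>k\<in>UNIV. \<Sum>a\<in>UNIV.
       lam * (1 - lam) ^ s * M k l a b * x k h h' a * cond_plan2 \<tau> l h h' b)"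
    by (subst sum_reorder4) (rule sum.cong[OF refl], rule sum.cong[OF refl], rule sum.cong[OF refl], rule sum_swap_inner3)
  also have "\<dots> = (\<Sum>s<T. lam * (1 - lam) ^ s * stage_payoff M x l (cond_plan2 \<tau> l) s)"
    unfolding stage_payoff_def sum_distrib_left by (simp add: mult_ac)
  finally show ?thesis .
qed

lemma cond_plan2_plan_constraints:
  assumes t: "is_strat2 T \<tau>" and T: "0 < T"
  shows "\<And>h h' b. is_hist T h h' \<Longrightarrow> 0 \<le> cond_plan2 \<tau> l h h' b"
    and "(\<Sum>b\<in>UNIV. cond_plan2 \<tau> l [] [] b) = 1"
    and "\<And>h h' a b. is_hist (T - 1) h h' \<Longrightarrow> (\<Sum>b'\<in>UNIV. cond_plan2 \<tau> l (h @ [a]) (h' @ [b]) b') = cond_plan2 \<tau> l h h' b"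
proof -
  have Y: "in_Y T (\<lambda>_. 1) (real_plan2 (\<lambda>_. 1) \<tau>)" by (rule in_Y_real_plan2[OF t _ T]) simp
  have e: "real_plan2 (\<lambda>_. 1) \<tau> = cond_plan2 \<tau>" by (simp add: fun_eq_iff real_plan2_def cond_plan2_def)
  show "\<And>h h' b. is_hist T h h' \<Longrightarrow> 0 \<le> cond_plan2 \<tau> l h h' b"
    and "(\<Sum>b\<in>UNIV. cond_plan2 \<tau> l [] [] b) = 1"
    and "\<And>h h' a b. is_hist (T - 1) h h' \<Longrightarrow> (\<Sum>b'\<in>UNIV. cond_plan2 \<tau> l (h @ [a]) (h' @ [b]) b') = cond_plan2 \<tau> l h h' b"
    using Y unfolding e in_Y_def by auto
qed

lemma lp1_feasible_le_type_payoff: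
  fixes M :: "'k::finite \<Rightarrow> 'l::finite \<Rightarrow> 'a::finite \<Rightarrow> 'b::finite \<Rightarrow> real"
  assumes F: "lp1_feasible M lam T p x u0 U" and T: "0 < T" and lam: "lam \<le> 1" and t: "is_strat2 T \<tau>"
  shows "u0 l \<le> (\<Sum>k\<in>UNIV. p k * cond_payoff M lam T (strat_of_plan1 x) \<tau> k l)"
proof -
  have x: "in_X T p x" using F by (simp add: lp1_feasible_def)
  have "u0 l \<le> (\<Sum>s<T. lam * (1 - lam) ^ s * stage_payoff M x l (cond_plan2 \<tau> l) s)"
    by (rule lp1_feasible_le_discounted[OF F T lam]) (use cond_plan2_plan_constraints[OF t T] in auto)
  then show ?thesis unfolding type_payoff_eq_discounted[OF x t] .
qed

text \<open>Player 2's best reply to a plan \<open>x\<close>, by backward induction: \<open>br_U \<dots> n\<close> is the continuation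
  value with \<open>n\<close> stages to go, and the best reply makes the LP constraints tight.\<close>

fun br_U :: "('k \<Rightarrow> 'l \<Rightarrow> 'a \<Rightarrow> 'b \<Rightarrow> real) \<Rightarrow> real \<Rightarrow> ('k,'a,'b) strat1 \<Rightarrow> 'l \<Rightarrow> nat \<Rightarrow>
    'a list \<Rightarrow> 'b list \<Rightarrow> 'a \<Rightarrow> 'b \<Rightarrow> real" where
  "br_U M lam x l 0 h h' a b = 0"
| "br_U M lam x l (Suc n) h h' a b = Min (range (\<lambda>b'. lam * (\<Sum>k\<in>UNIV. \<Sum>a'\<in>UNIV. M k l a' b' * x k (h @ [a]) (h' @ [b]) a')
     + (1 - lam) * (\<Sum>a'\<in>UNIV. br_U M lam x l n (h @ [a]) (h' @ [b]) a' b')))"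

definition best_reply_U :: "('k \<Rightarrow> 'l \<Rightarrow> 'a \<Rightarrow> 'b \<Rightarrow> real) \<Rightarrow> real \<Rightarrow> nat \<Rightarrow> ('k, 'a, 'b) strat1 \<Rightarrow> 'l \<Rightarrow> 'a list \<Rightarrow> 'b list \<Rightarrow> 'a \<Rightarrow> 'b \<Rightarrow> real" where
  "best_reply_U M lam T x = (\<lambda>l h h' a b. br_U M lam x l (T - 1 - length h) h h' a b)"

definition best_reply_u0 :: "('k \<Rightarrow> 'l \<Rightarrow> 'a \<Rightarrow> 'b \<Rightarrow> real) \<Rightarrow> real \<Rightarrow> nat \<Rightarrow> ('k, 'a, 'b) strat1 \<Rightarrow> 'l \<Rightarrow> real" where
  "best_reply_u0 M lam T x l = Min (range (lp1_lhs M lam x (best_reply_U M lam T x) l [] []))"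

definition best_reply_action :: "('k \<Rightarrow> 'l \<Rightarrow> 'a \<Rightarrow> 'b \<Rightarrow> real) \<Rightarrow> real \<Rightarrow> nat \<Rightarrow> ('k, 'a, 'b) strat1 \<Rightarrow> 'l \<Rightarrow> 'a list \<Rightarrow> 'b list \<Rightarrow> 'b" where
  "best_reply_action M lam T x l h h' =
  (SOME b. lp1_lhs M lam x (best_reply_U M lam T x) l h h' b = Min (range (lp1_lhs M lam x (best_reply_U M lam T x) l h h')))"

definition best_reply :: "('k \<Rightarrow> 'l \<Rightarrow> 'a \<Rightarrow> 'b \<Rightarrow> real) \<Rightarrow> real \<Rightarrow> nat \<Rightarrow> ('k, 'a, 'b) strat1 \<Rightarrow> ('l, 'a, 'b) strat2" where
  "best_reply M lam T x = (\<lambda>l h h' b. if b = best_reply_action M lam T x l h h' then 1 else (0::real))"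

lemma best_reply_U_last: "length h = T - 1 \<Longrightarrow> best_reply_U M lam T x l h h' a b = 0"
  by (simp add: best_reply_U_def)

lemma best_reply_U_step:
  assumes "is_hist (T - 1) h h'"
  shows "best_reply_U M lam T x l h h' a b = Min (range (lp1_lhs M lam x (best_reply_U M lam T x) l (h @ [a]) (h' @ [b])))"
proof -
  have e: "T - 1 - length h = Suc (T - 1 - length (h @ [a]))" using assms by (simp add: is_hist_def; linarith)
  show ?thesis unfolding best_reply_U_def e by (simp add: lp1_lhs_def best_reply_U_def)
qed

lemma Min_range_le:
  fixes f :: "'b::finite \<Rightarrow> real"
  shows "Min (range f) \<le> f b"
  by (rule Min_le) auto

lemma best_reply_action_min:
  fixes M :: "'k \<Rightarrow> 'l \<Rightarrow> 'a \<Rightarrow> 'b::finite \<Rightarrow> real"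
  shows "lp1_lhs M lam x (best_reply_U M lam T x) l h h' (best_reply_action M lam T x l h h') = Min (range (lp1_lhs M lam x (best_reply_U M lam T x) l h h'))"
proof -
  have "Min (range (lp1_lhs M lam x (best_reply_U M lam T x) l h h')) \<in> range (lp1_lhs M lam x (best_reply_U M lam T x) l h h')"
    by (rule Min_in) auto
  then have "\<exists>b. lp1_lhs M lam x (best_reply_U M lam T x) l h h' b = Min (range (lp1_lhs M lam x (best_reply_U M lam T x) l h h'))"
    by (metis (mono_tags, lifting) imageE)
  then show ?thesis unfolding best_reply_action_def by (rule someI_ex)
qed

lemma is_strat2_best_reply: "is_strat2 T (best_reply (M :: 'k \<Rightarrow> 'l \<Rightarrow> 'a \<Rightarrow> 'b::finite \<Rightarrow> real) lam T x)"
  unfolding is_strat2_def is_distr_def best_reply_def by (simp add: sum.delta')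

lemma lp1_feasible_best_reply:
  fixes M :: "'k::finite \<Rightarrow> 'l::finite \<Rightarrow> 'a::finite \<Rightarrow> 'b::finite \<Rightarrow> real"
  assumes x: "in_X T p x"
  shows "lp1_feasible M lam T p x (best_reply_u0 M lam T x) (best_reply_U M lam T x)"
  unfolding lp1_feasible_def
proof (intro conjI allI impI)
  show "in_X T p x" by (rule x)
next
  fix l and h :: "'a list" and h' :: "'b list" and a b
  assume "length h = T - 1 \<and> length h' = T - 1"
  then show "best_reply_U M lam T x l h h' a b = 0" by (simp add: best_reply_U_last)
next
  fix l b'
  show "lam * (\<Sum>k\<in>UNIV. \<Sum>a'\<in>UNIV. M k l a' b' * x k [] [] a') + (1 - lam) * (\<Sum>a'\<in>UNIV. best_reply_U M lam T x l [] [] a' b') \<ge> best_reply_u0 M lam T x l"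
    using Min_range_le[of "lp1_lhs M lam x (best_reply_U M lam T x) l [] []" b'] unfolding best_reply_u0_def lp1_lhs_def .
next
  fix l and h :: "'a list" and h' :: "'b list" and a b b'
  assume h: "is_hist (T - 1) h h'"
  show "lam * (\<Sum>k\<in>UNIV. \<Sum>a'\<in>UNIV. M k l a' b' * x k (h @ [a]) (h' @ [b]) a') + (1 - lam) * (\<Sum>a'\<in>UNIV. best_reply_U M lam T x l (h @ [a]) (h' @ [b]) a' b')
       \<ge> best_reply_U M lam T x l h h' a b"
    using Min_range_le[of "lp1_lhs M lam x (best_reply_U M lam T x) l (h @ [a]) (h' @ [b])" b'] unfolding best_reply_U_step[OF h] lp1_lhs_def .
qed

lemma sum_mult_indicator: "(\<Sum>b'\<in>(UNIV::'b::finite set). c * (if b' = \<beta> then 1 else 0) * R b') = c * (R \<beta> :: real)"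
proof -
  have "(\<Sum>b'\<in>(UNIV::'b set). c * (if b' = \<beta> then 1 else 0) * R b') = (\<Sum>b'\<in>UNIV. if b' = \<beta> then c * R b' else 0)"
    by (rule sum.cong) auto
  then show ?thesis by simp
qed

lemma best_reply_u0_eq_payoff:
  fixes M :: "'k::finite \<Rightarrow> 'l::finite \<Rightarrow> 'a::finite \<Rightarrow> 'b::finite \<Rightarrow> real"
  assumes x: "in_X T p x" and T: "0 < T" and lam: "lam \<le> 1"
  shows "best_reply_u0 M lam T x l = (\<Sum>k\<in>UNIV. p k * cond_payoff M lam T (strat_of_plan1 x) (best_reply M lam T x) k l)"
proof -
  let ?t = "best_reply M lam T x"
  let ?R = "lp1_lhs M lam x (best_reply_U M lam T x) l"
  have "best_reply_u0 M lam T x l = (\<Sum>t<T. lam * (1 - lam) ^ t * stage_payoff M x l (\<lambda>h h' b. cond_plan2 ?t l h h' b) t)"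
  proof (rule lp1_tight_eq_discounted[OF T lam])
    show "\<And>h h' a b. length h = T - 1 \<Longrightarrow> length h' = T - 1 \<Longrightarrow> best_reply_U M lam T x l h h' a b = 0"
      by (simp add: best_reply_U_last)
    have "(\<Sum>b'\<in>UNIV. cond_plan2 ?t l [] [] b' * ?R [] [] b') = (\<Sum>b'\<in>UNIV. 1 * (if b' = best_reply_action M lam T x l [] [] then 1 else 0) * ?R [] [] b')"
      by (rule sum.cong) (auto simp: cond_plan2_def best_reply_def)
    also have "\<dots> = best_reply_u0 M lam T x l" unfolding sum_mult_indicator best_reply_action_min best_reply_u0_def by simp
    finally show "(\<Sum>b'\<in>UNIV. cond_plan2 ?t l [] [] b' * ?R [] [] b') = best_reply_u0 M lam T x l" .
  next
    fix h :: "'a list" and h' :: "'b list" and a b assume h: "is_hist (T - 1) h h'"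
    then have hl: "length h = length h'" by (simp add: is_hist_def)
    have "(\<Sum>b'\<in>UNIV. cond_plan2 ?t l (h @ [a]) (h' @ [b]) b' * ?R (h @ [a]) (h' @ [b]) b') =
      (\<Sum>b'\<in>UNIV. cond_plan2 ?t l h h' b * (if b' = best_reply_action M lam T x l (h @ [a]) (h' @ [b]) then 1 else 0) * ?R (h @ [a]) (h' @ [b]) b')"
      by (rule sum.cong) (auto simp: cond_plan2_def pr2_snoc[OF hl] best_reply_def)
    also have "\<dots> = cond_plan2 ?t l h h' b * best_reply_U M lam T x l h h' a b"
      unfolding sum_mult_indicator best_reply_action_min best_reply_U_step[OF h] ..
    finally show "(\<Sum>b'\<in>UNIV. cond_plan2 ?t l (h @ [a]) (h' @ [b]) b' * ?R (h @ [a]) (h' @ [b]) b') = cond_plan2 ?t l h h' b * best_reply_U M lam T x l h h' a b" .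
  qed
  also have "\<dots> = (\<Sum>k\<in>UNIV. p k * cond_payoff M lam T (strat_of_plan1 x) ?t k l)"
    by (rule type_payoff_eq_discounted[symmetric, OF x is_strat2_best_reply])
  finally show ?thesis .
qed

lemma lp1_feasible_le_game_value:
  fixes M :: "'k::finite \<Rightarrow> 'l::finite \<Rightarrow> 'a::finite \<Rightarrow> 'b::finite \<Rightarrow> real"
  assumes T: "0 < T" and lam: "lam \<le> 1" and p: "\<forall>k. 0 \<le> p k" and q: "\<forall>l. 0 \<le> q l"
    and F: "lp1_feasible M lam T p x u0 U"
  shows "(\<Sum>l\<in>UNIV. q l * u0 l) \<le> game_value M lam T p q"
proof -
  obtain \<tau> where t: "is_strat2 T \<tau>"
    and upper: "\<And>\<sigma>. is_strat1 T \<sigma> \<Longrightarrow> payoff M lam T p q \<sigma> \<tau> \<le> game_value M lam T p q"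
    using is_value_game_value[OF T p q, of M lam] unfolding is_value_def by blast
  have x: "in_X T p x" using F by (simp add: lp1_feasible_def)
  have "(\<Sum>l\<in>UNIV. q l * u0 l) \<le> (\<Sum>l\<in>UNIV. q l * (\<Sum>k\<in>UNIV. p k * cond_payoff M lam T (strat_of_plan1 x) \<tau> k l))"
    using lp1_feasible_le_type_payoff[OF F T lam t] q by (intro sum_mono mult_left_mono) auto
  also have "\<dots> = payoff M lam T p q (strat_of_plan1 x) \<tau>" by (rule payoff_eq_sum_over_type2[symmetric])
  also have "\<dots> \<le> game_value M lam T p q" by (rule upper[OF is_strat1_strat_of_plan1[OF x]])
  finally show ?thesis .
qed

text \<open>The value is attained at the realization plan of an optimal strategy together with the
  continuation values of player 2's best reply to it.\<close>

lemma lp1_value_attained: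
  fixes M :: "'k::finite \<Rightarrow> 'l::finite \<Rightarrow> 'a::finite \<Rightarrow> 'b::finite \<Rightarrow> real"
  assumes T: "0 < T" and lam: "lam \<le> 1" and p: "\<forall>k. 0 \<le> p k" and q: "\<forall>l. 0 \<le> q l"
  shows "\<exists>x u0 U. lp1_feasible M lam T p x u0 U \<and> (\<Sum>l\<in>UNIV. q l * u0 l) = game_value M lam T p q"
proof -
  obtain \<sigma> where s: "is_strat1 T \<sigma>"
    and lower: "\<And>\<tau>. is_strat2 T \<tau> \<Longrightarrow> game_value M lam T p q \<le> payoff M lam T p q \<sigma> \<tau>"
    using is_value_game_value[OF T p q, of M lam] unfolding is_value_def by blast
  define x where "x = real_plan1 p \<sigma>"
  have x: "in_X T p x" unfolding x_def by (rule in_X_real_plan1[OF s p T])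
  have F: "lp1_feasible M lam T p x (best_reply_u0 M lam T x) (best_reply_U M lam T x)"
    by (rule lp1_feasible_best_reply[OF x])
  have "game_value M lam T p q \<le> payoff M lam T p q \<sigma> (best_reply M lam T x)"
    by (rule lower[OF is_strat2_best_reply])
  also have "\<dots> = payoff M lam T p q (strat_of_plan1 x) (best_reply M lam T x)"
    by (rule payoff_eq_if_same_plan1[OF s is_strat1_strat_of_plan1[OF x] is_strat2_best_reply])
       (use real_plan1_strat_of_plan1[OF x] in \<open>simp add: x_def\<close>)
  also have "\<dots> = (\<Sum>l\<in>UNIV. q l * best_reply_u0 M lam T x l)"
    unfolding payoff_eq_sum_over_type2 by (simp add: best_reply_u0_eq_payoff[OF x T lam])
  finally have "game_value M lam T p q \<le> (\<Sum>l\<in>UNIV. q l * best_reply_u0 M lam T x l)" .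
  then show ?thesis
    using F lp1_feasible_le_game_value[OF T lam p q F] by (intro exI) (rule conjI, assumption, rule antisym)
qed

lemma sec_u_bounds:
  fixes M :: "'k::finite \<Rightarrow> 'l::finite \<Rightarrow> 'a::finite \<Rightarrow> 'b::finite \<Rightarrow> real"
  assumes F: "lp1_feasible M lam T p x u0 U" and T: "0 < T" and lam: "lam \<le> 1" and t: "is_strat2 T \<tau>"
  shows "u0 l \<le> sec_u M lam T p x l"
    and "sec_u M lam T p x l \<le> (\<Sum>k\<in>UNIV. p k * cond_payoff M lam T (strat_of_plan1 x) \<tau> k l)"
proof -
  have nonempty: "{\<tau>::('l, 'a, 'b) strat2. is_strat2 T \<tau>} \<noteq> {}" using is_strat2_uniform2 by blast
  show "u0 l \<le> sec_u M lam T p x l"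
    unfolding sec_u_def by (rule cINF_greatest[OF nonempty]) (use lp1_feasible_le_type_payoff[OF F T lam] in auto)
  have "bdd_below ((\<lambda>\<tau>. \<Sum>k\<in>UNIV. p k * cond_payoff M lam T (strat_of_plan1 x) \<tau> k l) ` {\<tau>. is_strat2 T \<tau>})"
    by (rule bdd_belowI[where m="u0 l"]) (use lp1_feasible_le_type_payoff[OF F T lam] in auto)
  then show "sec_u M lam T p x l \<le> (\<Sum>k\<in>UNIV. p k * cond_payoff M lam T (strat_of_plan1 x) \<tau> k l)"
    unfolding sec_u_def by (rule cINF_lower) (use t in auto)
qed

lemma lp1_optimal_solution:
  fixes M :: "'k::finite \<Rightarrow> 'l::finite \<Rightarrow> 'a::finite \<Rightarrow> 'b::finite \<Rightarrow> real"
  assumes T: "0 < T" and lam: "lam \<le> 1" and p: "\<forall>k. 0 \<le> p k" and q: "\<forall>l. 0 < q l"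
    and O: "lp1_optimal M lam T p q x u0 U"
  shows "optimal_plan1 M lam T p q x \<and> (\<forall>l. sec_u M lam T p x l = u0 l)"
proof -
  have q0: "\<forall>l. 0 \<le> q l" using q by (simp add: less_imp_le)
  have F: "lp1_feasible M lam T p x u0 U" using O by (simp add: lp1_optimal_def)
  have x: "in_X T p x" using F by (simp add: lp1_feasible_def)
  let ?v = "game_value M lam T p q" and ?\<sigma> = "strat_of_plan1 x"
  have attains: "(\<Sum>l\<in>UNIV. q l * u0 l) = ?v"
  proof (rule antisym)
    show "(\<Sum>l\<in>UNIV. q l * u0 l) \<le> ?v" by (rule lp1_feasible_le_game_value[OF T lam p q0 F])
    show "?v \<le> (\<Sum>l\<in>UNIV. q l * u0 l)"
      using O lp1_value_attained[OF T lam p q0, of M] unfolding lp1_optimal_def by metis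
  qed
  have lower: "?v \<le> payoff M lam T p q ?\<sigma> \<tau>" if t: "is_strat2 T \<tau>" for \<tau>
  proof -
    have "(\<Sum>l\<in>UNIV. q l * u0 l) \<le> (\<Sum>l\<in>UNIV. q l * (\<Sum>k\<in>UNIV. p k * cond_payoff M lam T ?\<sigma> \<tau> k l))"
      using lp1_feasible_le_type_payoff[OF F T lam t] q0 by (intro sum_mono mult_left_mono) auto
    then show ?thesis unfolding attains payoff_eq_sum_over_type2 .
  qed
  then have "security1 M lam T p q ?\<sigma>"
    unfolding security1_def using is_strat1_strat_of_plan1[OF x] by blast
  then have "optimal_plan1 M lam T p q x"
    unfolding optimal_plan1_def using real_plan1_strat_of_plan1[OF x] by metis
  moreover have "sec_u M lam T p x l = u0 l" for l
  proof (rule weighted_sum_le_imp_eq[OF q])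
    show "u0 l \<le> sec_u M lam T p x l" for l by (rule sec_u_bounds(1)[OF F T lam is_strat2_uniform2])
    obtain \<tau> where t: "is_strat2 T \<tau>" and upper: "payoff M lam T p q ?\<sigma> \<tau> \<le> ?v"
      using is_value_game_value[OF T p q0, of M lam] is_strat1_strat_of_plan1[OF x] unfolding is_value_def by blast
    have "(\<Sum>l\<in>UNIV. q l * sec_u M lam T p x l) \<le> (\<Sum>l\<in>UNIV. q l * (\<Sum>k\<in>UNIV. p k * cond_payoff M lam T ?\<sigma> \<tau> k l))"
      using sec_u_bounds(2)[OF F T lam t] q0 by (intro sum_mono mult_left_mono) auto
    also have "\<dots> \<le> (\<Sum>l\<in>UNIV. q l * u0 l)" using upper unfolding attains payoff_eq_sum_over_type2 .
    finally show "(\<Sum>l\<in>UNIV. q l * sec_u M lam T p x l) \<le> (\<Sum>l\<in>UNIV. q l * u0 l)" .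
  qed
  ultimately show ?thesis by blast
qed

text \<open>Player 2's program is player 1's program for the game with roles exchanged and payoff negated.\<close>

definition swap_roles_neg :: "('k \<Rightarrow> 'a list \<Rightarrow> 'b list \<Rightarrow> 'a \<Rightarrow> 'b \<Rightarrow> real) \<Rightarrow> 'k \<Rightarrow> 'b list \<Rightarrow> 'a list \<Rightarrow> 'b \<Rightarrow> 'a \<Rightarrow> real" where
  "swap_roles_neg W k hb ha b a = - W k ha hb a b"

lemma swap_roles_neg_swap_roles_neg [simp]: "swap_roles_neg (swap_roles_neg W) = W"
  by (simp add: swap_roles_neg_def fun_eq_iff)

lemma lp_row_swap_roles:
  fixes M :: "'k::finite \<Rightarrow> 'l::finite \<Rightarrow> 'a::finite \<Rightarrow> 'b::finite \<Rightarrow> real"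
  shows "lam * (\<Sum>l\<in>UNIV. \<Sum>b\<in>UNIV. opp_game M l k b a * swap_roles y l hb ha b) + (1 - lam) * (\<Sum>b\<in>UNIV. swap_roles_neg W k hb ha b a)
    = - (lam * (\<Sum>l\<in>UNIV. \<Sum>b\<in>UNIV. M k l a b * y l ha hb b) + (1 - lam) * (\<Sum>b\<in>UNIV. W k ha hb a b))"
  by (simp add: opp_game_def swap_roles_neg_def sum_negf algebra_simps)

lemma lp2_feasible_iff_lp1_feasible:
  fixes M :: "'k::finite \<Rightarrow> 'l::finite \<Rightarrow> 'a::finite \<Rightarrow> 'b::finite \<Rightarrow> real"
  shows "lp2_feasible M lam T q y w0 W \<longleftrightarrow> lp1_feasible (opp_game M) lam T q (swap_roles y) (\<lambda>k. - w0 k) (swap_roles_neg W)"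
proof -
  have c1: "in_X T q (swap_roles y) \<longleftrightarrow> in_Y T q y" by simp
  have c2: "(\<forall>k (ha::'a list) (hb::'b list) a b. length ha = T - 1 \<and> length hb = T - 1 \<longrightarrow> W k ha hb a b = 0) \<longleftrightarrow>
     (\<forall>k (ha::'b list) (hb::'a list) a b. length ha = T - 1 \<and> length hb = T - 1 \<longrightarrow> swap_roles_neg W k ha hb a b = 0)"
    unfolding swap_roles_neg_def by (metis neg_equal_0_iff_equal)
  have c3: "(\<forall>k a'. lam * (\<Sum>l\<in>UNIV. \<Sum>b'\<in>UNIV. M k l a' b' * y l [] [] b')
             + (1 - lam) * (\<Sum>b'\<in>UNIV. W k [] [] a' b') \<le> w0 k) \<longleftrightarrow>
     (\<forall>k a'. lam * (\<Sum>l\<in>UNIV. \<Sum>b'\<in>UNIV. opp_game M l k b' a' * swap_roles y l [] [] b')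
             + (1 - lam) * (\<Sum>b'\<in>UNIV. swap_roles_neg W k [] [] b' a') \<ge> - w0 k)"
    by (simp only: lp_row_swap_roles neg_le_iff_le)
  have c4: "(\<forall>k (ha::'a list) (hb::'b list) a b a'. is_hist (T - 1) ha hb \<longrightarrow>
        lam * (\<Sum>l\<in>UNIV. \<Sum>b'\<in>UNIV. M k l a' b' * y l (ha @ [a]) (hb @ [b]) b')
        + (1 - lam) * (\<Sum>b'\<in>UNIV. W k (ha @ [a]) (hb @ [b]) a' b') \<le> W k ha hb a b) \<longleftrightarrow>
     (\<forall>k (hb::'b list) (ha::'a list) b a a'. is_hist (T - 1) hb ha \<longrightarrow>
        lam * (\<Sum>l\<in>UNIV. \<Sum>b'\<in>UNIV. opp_game M l k b' a' * swap_roles y l (hb @ [b]) (ha @ [a]) b')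
        + (1 - lam) * (\<Sum>b'\<in>UNIV. swap_roles_neg W k (hb @ [b]) (ha @ [a]) b' a') \<ge> swap_roles_neg W k hb ha b a)"
  proof -
    have e: "swap_roles_neg W k hb ha b a = - W k ha hb a b" for k ha hb a b by (simp add: swap_roles_neg_def)
    have h: "is_hist (T - 1) hb ha = is_hist (T - 1) ha hb" for ha :: "'a list" and hb :: "'b list"
      by (auto simp: is_hist_def)
    show ?thesis unfolding lp_row_swap_roles unfolding e h neg_le_iff_le by blast
  qed
  show ?thesis
    unfolding lp1_feasible_def lp2_feasible_def c1 c2 c3 c4 by simp
qed

lemma is_value_opp_game:
  fixes M :: "'k::finite \<Rightarrow> 'l::finite \<Rightarrow> 'a::finite \<Rightarrow> 'b::finite \<Rightarrow> real"
  assumes "is_value M lam T p q v"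
  shows "is_value (opp_game M) lam T q p (- v)"
proof -
  obtain \<sigma> \<tau> where st: "is_strat1 T \<sigma>" "\<forall>\<tau>. is_strat2 T \<tau> \<longrightarrow> payoff M lam T p q \<sigma> \<tau> \<ge> v"
    "is_strat2 T \<tau>" "\<forall>\<sigma>. is_strat1 T \<sigma> \<longrightarrow> payoff M lam T p q \<sigma> \<tau> \<le> v"
    using assms unfolding is_value_def by blast
  have 1: "is_strat1 T (swap_roles \<tau>)" using st(3) by simp
  have 2: "is_strat2 T (swap_roles \<sigma>)" using st(1) by simp
  have 3: "payoff (opp_game M) lam T q p (swap_roles \<tau>) \<tau>' \<ge> - v" if "is_strat2 T \<tau>'" for \<tau>' :: "('k,'b,'a) strat2"
  proof -
    have "payoff (opp_game M) lam T q p (swap_roles \<tau>) \<tau>' = payoff (opp_game M) lam T q p (swap_roles \<tau>) (swap_roles (swap_roles \<tau>'))" by simp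
    also have "\<dots> = - payoff M lam T p q (swap_roles \<tau>') \<tau>" by (rule payoff_opp_game)
    finally show ?thesis using st(4) that by simp
  qed
  have 4: "payoff (opp_game M) lam T q p \<sigma>' (swap_roles \<sigma>) \<le> - v" if "is_strat1 T \<sigma>'" for \<sigma>' :: "('l,'b,'a) strat1"
  proof -
    have "payoff (opp_game M) lam T q p \<sigma>' (swap_roles \<sigma>) = payoff (opp_game M) lam T q p (swap_roles (swap_roles \<sigma>')) (swap_roles \<sigma>)" by simp
    also have "\<dots> = - payoff M lam T p q \<sigma> (swap_roles \<sigma>')" by (rule payoff_opp_game)
    finally show ?thesis using st(2) that by simp
  qed
  show ?thesis unfolding is_value_def using 1 2 3 4 by blast
qed

lemma game_value_opp_game:
  fixes M :: "'k::finite \<Rightarrow> 'l::finite \<Rightarrow> 'a::finite \<Rightarrow> 'b::finite \<Rightarrow> real"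
  assumes T: "0 < T" and p: "\<forall>k. 0 \<le> p k" and q: "\<forall>l. 0 \<le> q l"
  shows "game_value (opp_game M) lam T q p = - game_value M lam T p q"
proof -
  obtain v where v: "is_value M lam T p q v"
    using is_value_exists[OF T p q, of M lam] by blast
  show ?thesis using game_value_eqI[OF v] game_value_eqI[OF is_value_opp_game[OF v]] by simp
qed

lemma optimal_plan2_of_opp_game:
  fixes M :: "'k::finite \<Rightarrow> 'l::finite \<Rightarrow> 'a::finite \<Rightarrow> 'b::finite \<Rightarrow> real"
  assumes T: "0 < T" and p: "\<forall>k. 0 \<le> p k" and q: "\<forall>l. 0 \<le> q l"
    and O: "optimal_plan1 (opp_game M) lam T q p (swap_roles y)"
  shows "optimal_plan2 M lam T p q y"
proof -
  obtain \<sigma>' where s: "security1 (opp_game M) lam T q p \<sigma>'"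
    and pl: "\<And>k ha hb a. is_hist T ha hb \<Longrightarrow> swap_roles y k ha hb a = real_plan1 q \<sigma>' k ha hb a"
    using O unfolding optimal_plan1_def by blast
  define \<tau> where "\<tau> = swap_roles \<sigma>'"
  have st: "is_strat2 T \<tau>" using s unfolding security1_def \<tau>_def by simp
  have sec: "security2 M lam T p q \<tau>"
    unfolding security2_def
  proof (intro conjI allI impI st)
    fix \<sigma> :: "('k,'a,'b) strat1" assume "is_strat1 T \<sigma>"
    then have "is_strat2 T (swap_roles \<sigma>)" by simp
    then have "payoff (opp_game M) lam T q p \<sigma>' (swap_roles \<sigma>) \<ge> game_value (opp_game M) lam T q p"
      using s unfolding security1_def by blast
    moreover have "payoff (opp_game M) lam T q p \<sigma>' (swap_roles \<sigma>) = - payoff M lam T p q \<sigma> \<tau>"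
      unfolding \<tau>_def using payoff_opp_game[of M lam T q p "swap_roles \<sigma>'" \<sigma>] by simp
    ultimately show "payoff M lam T p q \<sigma> \<tau> \<le> game_value M lam T p q"
      using game_value_opp_game[OF T p q, of M lam] by simp
  qed
  have "y l ha hb b = real_plan2 q \<tau> l ha hb b" if "is_hist T ha hb" for l ha hb b
  proof -
    have "is_hist T hb ha" using that by (auto simp: is_hist_def)
    then have "swap_roles y l hb ha b = real_plan1 q \<sigma>' l hb ha b" by (rule pl)
    then show ?thesis unfolding \<tau>_def real_plan2_swap_roles by simp
  qed
  then show ?thesis unfolding optimal_plan2_def using sec by blast
qed

lemma sec_w_eq_uminus_sec_u:
  fixes M :: "'k::finite \<Rightarrow> 'l::finite \<Rightarrow> 'a::finite \<Rightarrow> 'b::finite \<Rightarrow> real"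
  shows "sec_w M lam T q y k = - sec_u (opp_game M) lam T q (swap_roles y) k"
proof -
  define F where "F \<sigma> = (\<Sum>l\<in>UNIV. q l * cond_payoff M lam T \<sigma> (strat_of_plan2 y) k l)" for \<sigma>
  have S: "swap_roles ` {\<tau>'::('k,'b,'a) strat2. is_strat2 T \<tau>'} = {\<sigma>::('k,'a,'b) strat1. is_strat1 T \<sigma>}"
  proof
    show "swap_roles ` {\<tau>'::('k,'b,'a) strat2. is_strat2 T \<tau>'} \<subseteq> {\<sigma>. is_strat1 T \<sigma>}" by auto
    show "{\<sigma>::('k,'a,'b) strat1. is_strat1 T \<sigma>} \<subseteq> swap_roles ` {\<tau>'. is_strat2 T \<tau>'}"
    proof
      fix \<sigma> :: "('k,'a,'b) strat1" assume "\<sigma> \<in> {\<sigma>. is_strat1 T \<sigma>}"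
      then show "\<sigma> \<in> swap_roles ` {\<tau>'. is_strat2 T \<tau>'}" by (intro image_eqI[of _ _ "swap_roles \<sigma>"]) auto
    qed
  qed
  have c: "(\<Sum>l\<in>UNIV. q l * cond_payoff (opp_game M) lam T (strat_of_plan1 (swap_roles y)) \<tau>' l k) = - F (swap_roles \<tau>')"
    for \<tau>' :: "('k,'b,'a) strat2"
  proof -
    have "cond_payoff (opp_game M) lam T (strat_of_plan1 (swap_roles y)) \<tau>' l k =
        cond_payoff (opp_game M) lam T (swap_roles (strat_of_plan2 y)) (swap_roles (swap_roles \<tau>')) l k" for l
      by (simp add: strat_of_plan1_swap_roles)
    then show ?thesis unfolding F_def cond_payoff_opp_game by (simp add: sum_negf)
  qed
  have "sec_u (opp_game M) lam T q (swap_roles y) k = Inf ((\<lambda>\<tau>'. - F (swap_roles \<tau>')) ` {\<tau>'::('k,'b,'a) strat2. is_strat2 T \<tau>'})"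
    unfolding sec_u_def c ..
  also have "\<dots> = - Sup ((\<lambda>\<tau>'. F (swap_roles \<tau>')) ` {\<tau>'::('k,'b,'a) strat2. is_strat2 T \<tau>'})"
    unfolding Inf_real_def image_image by simp
  also have "(\<lambda>\<tau>'. F (swap_roles \<tau>')) ` {\<tau>'::('k,'b,'a) strat2. is_strat2 T \<tau>'} = F ` {\<sigma>. is_strat1 T \<sigma>}"
    unfolding S[symmetric] image_image ..
  also have "Sup (F ` {\<sigma>. is_strat1 T \<sigma>}) = sec_w M lam T q y k"
    unfolding sec_w_def F_def ..
  finally have X: "sec_u (opp_game M) lam T q (swap_roles y) k = - sec_w M lam T q y k" .
  show ?thesis using X by linarith
qed

lemma lp1_optimal_of_lp2_optimal:
  fixes M :: "'k::finite \<Rightarrow> 'l::finite \<Rightarrow> 'a::finite \<Rightarrow> 'b::finite \<Rightarrow> real"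
  assumes O: "lp2_optimal M lam T p q y w0 W"
  shows "lp1_optimal (opp_game M) lam T q p (swap_roles y) (\<lambda>k. - w0 k) (swap_roles_neg W)"
  unfolding lp1_optimal_def
proof (intro conjI allI impI)
  show "lp1_feasible (opp_game M) lam T q (swap_roles y) (\<lambda>k. - w0 k) (swap_roles_neg W)"
    using O unfolding lp2_optimal_def lp2_feasible_iff_lp1_feasible by blast
next
  fix x' u0' U' assume F: "lp1_feasible (opp_game M) lam T q x' u0' U'"
  have "lp2_feasible M lam T q (swap_roles x') (\<lambda>k. - u0' k) (swap_roles_neg U')"
    unfolding lp2_feasible_iff_lp1_feasible using F by simp
  then have "(\<Sum>k\<in>UNIV. p k * w0 k) \<le> (\<Sum>k\<in>UNIV. p k * - u0' k)"
    using O unfolding lp2_optimal_def by blast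
  then show "(\<Sum>k\<in>UNIV. p k * u0' k) \<le> (\<Sum>k\<in>UNIV. p k * - w0 k)"
    by (simp add: sum_negf)
qed

lemma lp2_value_attained:
  fixes M :: "'k::finite \<Rightarrow> 'l::finite \<Rightarrow> 'a::finite \<Rightarrow> 'b::finite \<Rightarrow> real"
  assumes T: "0 < T" and lam: "lam \<le> 1" and p: "\<forall>k. 0 \<le> p k" and q: "\<forall>l. 0 \<le> q l"
  shows "\<exists>y w0 W. lp2_feasible M lam T q y w0 W \<and> (\<Sum>k\<in>UNIV. p k * w0 k) = game_value M lam T p q"
proof -
  obtain x u0 U where F: "lp1_feasible (opp_game M) lam T q x u0 U"
    and v: "(\<Sum>k\<in>UNIV. p k * u0 k) = game_value (opp_game M) lam T q p"
    using lp1_value_attained[OF T lam q p] by blast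
  have "lp2_feasible M lam T q (swap_roles x) (\<lambda>k. - u0 k) (swap_roles_neg U)"
    unfolding lp2_feasible_iff_lp1_feasible using F by simp
  moreover have "(\<Sum>k\<in>UNIV. p k * - u0 k) = game_value M lam T p q"
    using v game_value_opp_game[OF T p q, of M lam] by (simp add: sum_negf)
  ultimately show ?thesis by blast
qed

lemma lp2_feasible_ge_game_value:
  fixes M :: "'k::finite \<Rightarrow> 'l::finite \<Rightarrow> 'a::finite \<Rightarrow> 'b::finite \<Rightarrow> real"
  assumes T: "0 < T" and lam: "lam \<le> 1" and p: "\<forall>k. 0 \<le> p k" and q: "\<forall>l. 0 \<le> q l"
    and F: "lp2_feasible M lam T q y w0 W"
  shows "game_value M lam T p q \<le> (\<Sum>k\<in>UNIV. p k * w0 k)"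
proof -
  have "lp1_feasible (opp_game M) lam T q (swap_roles y) (\<lambda>k. - w0 k) (swap_roles_neg W)"
    using F unfolding lp2_feasible_iff_lp1_feasible .
  then have "(\<Sum>k\<in>UNIV. p k * - w0 k) \<le> game_value (opp_game M) lam T q p"
    by (rule lp1_feasible_le_game_value[OF T lam q p])
  then show ?thesis using game_value_opp_game[OF T p q, of M lam] by (simp add: sum_negf)
qed

lemma lp2_optimal_solution:
  fixes M :: "'k::finite \<Rightarrow> 'l::finite \<Rightarrow> 'a::finite \<Rightarrow> 'b::finite \<Rightarrow> real"
  assumes T: "0 < T" and lam: "lam \<le> 1" and p: "\<forall>k. 0 < p k" and q: "\<forall>l. 0 \<le> q l"
    and O: "lp2_optimal M lam T p q y w0 W"
  shows "optimal_plan2 M lam T p q y \<and> (\<forall>k. sec_w M lam T q y k = w0 k)"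
proof -
  have p0: "\<forall>k. 0 \<le> p k" using p by (simp add: less_imp_le)
  have opt: "optimal_plan1 (opp_game M) lam T q p (swap_roles y) \<and>
      (\<forall>k. sec_u (opp_game M) lam T q (swap_roles y) k = - w0 k)"
    by (rule lp1_optimal_solution[OF T lam q p lp1_optimal_of_lp2_optimal[OF O]])
  then have "optimal_plan2 M lam T p q y"
    using optimal_plan2_of_opp_game[OF T p0 q] by blast
  moreover have "\<forall>k. sec_w M lam T q y k = w0 k"
    using opt by (simp add: sec_w_eq_uminus_sec_u)
  ultimately show ?thesis by blast
qed

theorem theorem3:
  fixes M :: "'k::finite \<Rightarrow> 'l::finite \<Rightarrow> 'a::finite \<Rightarrow> 'b::finite \<Rightarrow> real"
    and lam :: real and T :: nat and p :: "'k \<Rightarrow> real" and q :: "'l \<Rightarrow> real"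
  assumes "0 < lam" "lam < 1" "T \<ge> 1"
    and "\<forall>k. p k > 0" "(\<Sum>k\<in>UNIV. p k) = 1"
    and "\<forall>l. q l > 0" "(\<Sum>l\<in>UNIV. q l) = 1"
  shows
    "(\<exists>x u0 U. lp1_feasible M lam T p x u0 U \<and>
        (\<Sum>l\<in>UNIV. q l * u0 l) = game_value M lam T p q) \<and>
     (\<forall>x u0 U. lp1_feasible M lam T p x u0 U \<longrightarrow>
        (\<Sum>l\<in>UNIV. q l * u0 l) \<le> game_value M lam T p q) \<and>
     (\<forall>x u0 U. lp1_optimal M lam T p q x u0 U \<longrightarrow>
        optimal_plan1 M lam T p q x \<and> (\<forall>l. sec_u M lam T p x l = u0 l)) \<and>
     (\<exists>y w0 W. lp2_feasible M lam T q y w0 W \<and>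
        (\<Sum>k\<in>UNIV. p k * w0 k) = game_value M lam T p q) \<and>
     (\<forall>y w0 W. lp2_feasible M lam T q y w0 W \<longrightarrow>
        (\<Sum>k\<in>UNIV. p k * w0 k) \<ge> game_value M lam T p q) \<and>
     (\<forall>y w0 W. lp2_optimal M lam T p q y w0 W \<longrightarrow>
        optimal_plan2 M lam T p q y \<and> (\<forall>k. sec_w M lam T q y k = w0 k))"
proof -
  have T: "0 < T" and lam: "lam \<le> 1" using assms(2,3) by auto
  have p: "\<forall>k. 0 \<le> p k" and q: "\<forall>l. 0 \<le> q l" using assms(4,6) by (simp_all add: less_imp_le)
  show ?thesis
    using lp1_value_attained[OF T lam p q] lp1_feasible_le_game_value[OF T lam p q]
      lp1_optimal_solution[OF T lam p assms(6)] lp2_value_attained[OF T lam p q]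
      lp2_feasible_ge_game_value[OF T lam p q] lp2_optimal_solution[OF T lam assms(4) q]
    by blast
qed

end
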